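(* Let $d\geqslant 2$ and $a=(a_1,\dots,a_d)\in\mathbb{Z}_p^d$ with $a_d\neq 0$. Let $L$ be the $\mathbb{Z}_p$-Lie lattice $\mathbb{Z}_p^{d+1}$ with canonical basis $(x_0,\dots,x_d)$ and bracket determined by $[x_i,x_j]=0$ for $1\leqslant i,j\leqslant d$, $[x_0,x_1]=\sum_{i=1}^d a_ix_i$, and $[x_0,x_{i+1}]=x_i$ for $1\leqslant i<d$. Then $L$ admits a finite-index subalgebra that is not self-similar of index $p$.
   Context: $p$ is any prime. A virtual endomorphism of a $\mathbb{Z}_p$-Lie lattice $M$ is a homomorphism of algebras $\varphi:N\to M$ with $N\subseteq M$ a finite-index subalgebra, of index $[M:N]$. An ideal $I$ of $M$ is $\varphi$-invariant if it lies in the domain of every power of $\varphi$ and $\varphi(I)\subseteq I$; $\varphi$ is simple if no non-zero ideal is $\varphi$-invariant. $M$ is self-similar of index $p^k$ if it has a simple virtual endomorphism of index $p^k$. *)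

theory Defs
  imports "HOL-Computational_Algebra.Primes"
begin

text \<open>An element of Z_p is a compatible sequence of residues x n in {0..<p^n}
  with x n = x (Suc n) mod p^n.  Ring operations are computed level-wise.\<close>

type_synonym zp = "nat \<Rightarrow> int"

definition zp_carrier :: "nat \<Rightarrow> zp set" where
  "zp_carrier p = {x. \<forall>n. 0 \<le> x n \<and> x n < int p ^ n \<and> x n = x (Suc n) mod int p ^ n}"

definition zp_zero :: zp where "zp_zero = (\<lambda>n. 0)"
definition zp_one :: "nat \<Rightarrow> zp" where "zp_one p = (\<lambda>n. 1 mod int p ^ n)"
definition zp_add :: "nat \<Rightarrow> zp \<Rightarrow> zp \<Rightarrow> zp" where
  "zp_add p x y = (\<lambda>n. (x n + y n) mod int p ^ n)"
definition zp_neg :: "nat \<Rightarrow> zp \<Rightarrow> zp" where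
  "zp_neg p x = (\<lambda>n. (- x n) mod int p ^ n)"
definition zp_mul :: "nat \<Rightarrow> zp \<Rightarrow> zp \<Rightarrow> zp" where
  "zp_mul p x y = (\<lambda>n. (x n * y n) mod int p ^ n)"

type_synonym vec = "nat \<Rightarrow> zp"

definition vzero :: vec where "vzero = (\<lambda>i. zp_zero)"
definition vadd :: "nat \<Rightarrow> vec \<Rightarrow> vec \<Rightarrow> vec" where
  "vadd p u v = (\<lambda>i. zp_add p (u i) (v i))"
definition vsub :: "nat \<Rightarrow> vec \<Rightarrow> vec \<Rightarrow> vec" where
  "vsub p u v = (\<lambda>i. zp_add p (u i) (zp_neg p (v i)))"
definition vsmul :: "nat \<Rightarrow> zp \<Rightarrow> vec \<Rightarrow> vec" where
  "vsmul p r v = (\<lambda>i. zp_mul p r (v i))"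

definition Lcar :: "nat \<Rightarrow> nat \<Rightarrow> vec set" where
  "Lcar p d = {v. (\<forall>i\<le>d. v i \<in> zp_carrier p) \<and> (\<forall>i>d. v i = zp_zero)}"

text \<open>Structure constants: [x_i, x_j] = sum_k (sc i j k) x_k, with
  [x_0,x_1] = sum_{k=1}^d a_k x_k, [x_0,x_{i+1}] = x_i for 1 <= i < d,
  antisymmetry, and all other brackets of basis vectors zero.\<close>

definition sc :: "nat \<Rightarrow> nat \<Rightarrow> (nat \<Rightarrow> zp) \<Rightarrow> nat \<Rightarrow> nat \<Rightarrow> nat \<Rightarrow> zp" where
  "sc p d a i j k =
    (if i = 0 \<and> j = 1 then (if 1 \<le> k \<and> k \<le> d then a k else zp_zero)
     else if i = 1 \<and> j = 0 then (if 1 \<le> k \<and> k \<le> d then zp_neg p (a k) else zp_zero)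
     else if i = 0 \<and> 2 \<le> j \<and> j \<le> d then (if k = j - 1 then zp_one p else zp_zero)
     else if j = 0 \<and> 2 \<le> i \<and> i \<le> d then (if k = i - 1 then zp_neg p (zp_one p) else zp_zero)
     else zp_zero)"

definition Lbr :: "nat \<Rightarrow> nat \<Rightarrow> (nat \<Rightarrow> zp) \<Rightarrow> vec \<Rightarrow> vec \<Rightarrow> vec" where
  "Lbr p d a u v = (\<lambda>k. if k \<le> d then
      (\<lambda>n. (\<Sum>i\<le>d. \<Sum>j\<le>d. u i n * v j n * sc p d a i j k n) mod int p ^ n)
     else zp_zero)"

definition subalg :: "nat \<Rightarrow> (vec \<Rightarrow> vec \<Rightarrow> vec) \<Rightarrow> vec set \<Rightarrow> vec set \<Rightarrow> bool" where
  "subalg p br M N \<longleftrightarrow> N \<subseteq> M \<and> vzero \<in> N \<and>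
     (\<forall>x\<in>N. \<forall>y\<in>N. vadd p x y \<in> N) \<and>
     (\<forall>r\<in>zp_carrier p. \<forall>x\<in>N. vsmul p r x \<in> N) \<and>
     (\<forall>x\<in>N. \<forall>y\<in>N. br x y \<in> N)"

definition cosets :: "nat \<Rightarrow> vec set \<Rightarrow> vec set \<Rightarrow> vec set set" where
  "cosets p M N = (\<lambda>x. {y \<in> M. vsub p y x \<in> N}) ` M"

definition finite_index :: "nat \<Rightarrow> vec set \<Rightarrow> vec set \<Rightarrow> bool" where
  "finite_index p M N \<longleftrightarrow> finite (cosets p M N)"

definition lindex :: "nat \<Rightarrow> vec set \<Rightarrow> vec set \<Rightarrow> nat" where
  "lindex p M N = card (cosets p M N)"

definition lie_ideal :: "nat \<Rightarrow> (vec \<Rightarrow> vec \<Rightarrow> vec) \<Rightarrow> vec set \<Rightarrow> vec set \<Rightarrow> bool" where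
  "lie_ideal p br M I \<longleftrightarrow> I \<subseteq> M \<and> vzero \<in> I \<and>
     (\<forall>x\<in>I. \<forall>y\<in>I. vadd p x y \<in> I) \<and>
     (\<forall>r\<in>zp_carrier p. \<forall>x\<in>I. vsmul p r x \<in> I) \<and>
     (\<forall>x\<in>M. \<forall>y\<in>I. br x y \<in> I)"

definition virt_endo :: "nat \<Rightarrow> (vec \<Rightarrow> vec \<Rightarrow> vec) \<Rightarrow> vec set \<Rightarrow> vec set \<Rightarrow> (vec \<Rightarrow> vec) \<Rightarrow> bool" where
  "virt_endo p br M N \<phi> \<longleftrightarrow> subalg p br M N \<and> finite_index p M N \<and>
     (\<forall>x\<in>N. \<phi> x \<in> M) \<and>
     (\<forall>x\<in>N. \<forall>y\<in>N. \<phi> (vadd p x y) = vadd p (\<phi> x) (\<phi> y)) \<and>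
     (\<forall>r\<in>zp_carrier p. \<forall>x\<in>N. \<phi> (vsmul p r x) = vsmul p r (\<phi> x)) \<and>
     (\<forall>x\<in>N. \<forall>y\<in>N. \<phi> (br x y) = br (\<phi> x) (\<phi> y))"

fun pow_dom :: "vec set \<Rightarrow> vec set \<Rightarrow> (vec \<Rightarrow> vec) \<Rightarrow> nat \<Rightarrow> vec set" where
  "pow_dom M N \<phi> 0 = M"
| "pow_dom M N \<phi> (Suc k) = {x \<in> N. \<phi> x \<in> pow_dom M N \<phi> k}"

definition invariant :: "vec set \<Rightarrow> vec set \<Rightarrow> (vec \<Rightarrow> vec) \<Rightarrow> vec set \<Rightarrow> bool" where
  "invariant M N \<phi> I \<longleftrightarrow> (\<forall>k. I \<subseteq> pow_dom M N \<phi> k) \<and> \<phi> ` I \<subseteq> I"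

definition simple_ve :: "nat \<Rightarrow> (vec \<Rightarrow> vec \<Rightarrow> vec) \<Rightarrow> vec set \<Rightarrow> vec set \<Rightarrow> (vec \<Rightarrow> vec) \<Rightarrow> bool" where
  "simple_ve p br M N \<phi> \<longleftrightarrow>
     (\<forall>I. lie_ideal p br M I \<and> invariant M N \<phi> I \<longrightarrow> I = {vzero})"

definition self_similar :: "nat \<Rightarrow> (vec \<Rightarrow> vec \<Rightarrow> vec) \<Rightarrow> vec set \<Rightarrow> nat \<Rightarrow> bool" where
  "self_similar p br M q \<longleftrightarrow>
     (\<exists>N \<phi>. virt_endo p br M N \<phi> \<and> lindex p M N = q \<and> simple_ve p br M N \<phi>)"

end

theory Submission
  imports Defs "HOL-Library.FuncSet"
begin

text \<open>Let \<open>A\<close> be the abelian ideal spanned by \<open>x\<^sub>1, \<dots>, x\<^sub>d\<close>, on which \<open>x\<^sub>0\<close> acts by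
  an injective derivation \<open>D\<close> (injective because \<open>a\<^sub>d \<noteq> 0\<close>). The subalgebra is
  \<open>N = p \<int>\<^sub>p x\<^sub>0 + \<Sum>\<^sub>i p\<^sup>d\<^sup>-\<^sup>i \<int>\<^sub>p x\<^sub>i\<close>. Let \<open>\<phi> : H \<rightarrow> N\<close> be a virtual endomorphism with
  \<open>[N : H] = p\<close>, so that \<open>p N \<subseteq> H\<close>. If all \<open>x\<^sub>0\<close>-coordinates in \<open>H\<close> are divisible by \<open>p\<^sup>2\<close>,
  then \<open>N \<inter> A \<subseteq> H\<close>, and either \<open>N \<inter> A\<close> or \<open>[p\<^sup>2 x\<^sub>0, N \<inter> A]\<close>, which \<open>\<phi>\<close> kills, is a
  nonzero \<open>\<phi>\<close>-invariant ideal. Otherwise \<open>H\<close> contains \<open>h\<^sub>0\<close> with \<open>x\<^sub>0\<close>-coordinate \<open>p\<close>, and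
  the kernel of \<open>\<phi>\<close> on \<open>H \<inter> A\<close> is an invariant ideal unless it vanishes. In that case
  \<open>\<phi>\<close> maps \<open>H \<inter> A\<close> into \<open>A\<close> and satisfies \<open>\<phi> (p D u) = c p D (\<phi> u)\<close>, where \<open>p c\<close> is
  the \<open>x\<^sub>0\<close>-coordinate of \<open>\<phi> h\<^sub>0\<close>. Comparing the last coordinates of the images of
  \<open>p x\<^sub>d\<close>, \<open>p D x\<^sub>d\<close> and \<open>(p D)\<^sup>d (p x\<^sub>d)\<close> shows that \<open>p\<close> divides the \<open>x\<^sub>d\<close>-coordinate of
  \<open>\<phi> (p x\<^sub>d)\<close>, whether \<open>c\<close> is a unit or not; then \<open>p\<^sup>d A\<close> is a nonzero invariant ideal.\<close>

section \<open>The \<open>p\<close>-adic integers\<close>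

lemma mod_inverse_unique:
  fixes m :: int
  assumes "(a * w1) mod m = 1 mod m" and "(a * w2) mod m = 1 mod m"
  shows "w1 mod m = w2 mod m"
proof -
  have "w1 mod m = (w1 * ((a * w2) mod m)) mod m" using assms(2) by (simp add: mod_simps)
  also have "\<dots> = (((a * w1) mod m) * w2) mod m" by (simp add: mod_simps algebra_simps)
  also have "\<dots> = w2 mod m" using assms(1) by (simp add: mod_simps)
  finally show ?thesis .
qed

locale padic =
  fixes p :: nat
  assumes prime_p: "prime p"
begin

abbreviation Zp :: "zp set" where "Zp \<equiv> zp_carrier p"

abbreviation zadd (infixl "\<oplus>" 65) where "x \<oplus> y \<equiv> zp_add p x y"
abbreviation zmul (infixl "\<otimes>" 70) where "x \<otimes> y \<equiv> zp_mul p x y"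
abbreviation zneg where "zneg x \<equiv> zp_neg p x"
abbreviation zone where "zone \<equiv> zp_one p"

lemma p_ge_2: "p \<ge> 2"
  using prime_p prime_ge_2_nat by blast

lemma prime_int_p: "prime (int p)"
  using prime_p by (simp add: prime_nat_int_transfer)

lemma p_power_pos [simp]: "int p ^ n > 0"
  using p_ge_2 by simp

lemma p_power_nonzero [simp]: "int p ^ n \<noteq> 0"
  using p_ge_2 by simp

lemma zp_carrierD: "x \<in> Zp \<Longrightarrow> 0 \<le> x n \<and> x n < int p ^ n \<and> x n = x (Suc n) mod int p ^ n"
  unfolding zp_carrier_def by blast

lemma zp_level_mod [simp]: "x \<in> Zp \<Longrightarrow> x n mod int p ^ n = x n"
  using zp_carrierD[of x n] by simp

lemma zp_level_compat:
  assumes "x \<in> Zp" "n \<le> m"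
  shows "x m mod int p ^ n = x n"
  using assms(2)
proof (induction m rule: dec_induct)
  case base
  then show ?case using assms by simp
next
  case (step m)
  have "x m = x (Suc m) mod int p ^ m" using zp_carrierD[OF assms(1)] by blast
  then have "x m mod int p ^ n = x (Suc m) mod int p ^ n"
    using step.hyps(1) by (simp add: mod_mod_cancel le_imp_power_dvd)
  then show ?case using step by simp
qed

lemma zp_level_0 [simp]: "x \<in> Zp \<Longrightarrow> x 0 = 0"
  using zp_carrierD[of x 0] by simp

lemma zp_carrierI_mod:
  assumes "\<And>n. f n = g n mod int p ^ n"
    and "\<And>n. g (Suc n) mod int p ^ n = g n mod int p ^ n"
  shows "f \<in> Zp"
  unfolding zp_carrier_def
proof (intro CollectI allI conjI)
  fix n
  show "0 \<le> f n" "f n < int p ^ n"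
    using assms(1)[of n] p_power_pos[of n] by simp_all
  have "f (Suc n) mod int p ^ n = g (Suc n) mod int p ^ n"
    using assms(1)[of "Suc n"] by (simp add: mod_mod_cancel)
  then show "f n = f (Suc n) mod int p ^ n" using assms by simp
qed

lemma zp_zero_mem [simp]: "zp_zero \<in> Zp"
  by (rule zp_carrierI_mod[where g="\<lambda>n. 0"]) (simp_all add: zp_zero_def)

lemma zp_one_mem [simp]: "zone \<in> Zp"
  by (rule zp_carrierI_mod[where g="\<lambda>n. 1"]) (simp_all add: zp_one_def)

lemma zp_add_mem [simp]: "x \<in> Zp \<Longrightarrow> y \<in> Zp \<Longrightarrow> x \<oplus> y \<in> Zp"
  by (rule zp_carrierI_mod[where g="\<lambda>n. x n + y n"])
    (simp_all add: zp_add_def, metis zp_level_compat le_SucI order_refl mod_add_eq)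

lemma zp_neg_mem [simp]: "x \<in> Zp \<Longrightarrow> zneg x \<in> Zp"
  by (rule zp_carrierI_mod[where g="\<lambda>n. - x n"])
    (simp_all add: zp_neg_def, metis zp_level_compat le_SucI order_refl mod_minus_eq)

lemma zp_mul_mem [simp]: "x \<in> Zp \<Longrightarrow> y \<in> Zp \<Longrightarrow> x \<otimes> y \<in> Zp"
  by (rule zp_carrierI_mod[where g="\<lambda>n. x n * y n"])
    (simp_all add: zp_mul_def, metis zp_level_compat le_SucI order_refl mod_mult_eq)

definition zp_of_int :: "int \<Rightarrow> zp" where
  "zp_of_int k = (\<lambda>n. k mod int p ^ n)"

lemma zp_of_int_mem [simp]: "zp_of_int k \<in> Zp"
  by (rule zp_carrierI_mod[where g="\<lambda>n. k"]) (simp_all add: zp_of_int_def)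

lemma zp_add_commute: "x \<oplus> y = y \<oplus> x"
  by (rule ext) (simp add: zp_add_def algebra_simps)
lemma zp_add_assoc: "(x \<oplus> y) \<oplus> z = x \<oplus> (y \<oplus> z)"
  by (rule ext) (simp add: zp_add_def mod_simps algebra_simps)
lemma zp_add_left_commute: "x \<oplus> (y \<oplus> z) = y \<oplus> (x \<oplus> z)"
  by (metis zp_add_assoc zp_add_commute)
lemma zp_add_zero [simp]: "x \<in> Zp \<Longrightarrow> x \<oplus> zp_zero = x"
  by (rule ext) (simp add: zp_add_def zp_zero_def)
lemma zp_zero_add [simp]: "x \<in> Zp \<Longrightarrow> zp_zero \<oplus> x = x"
  by (rule ext) (simp add: zp_add_def zp_zero_def)
lemma zp_add_neg [simp]: "x \<in> Zp \<Longrightarrow> x \<oplus> zneg x = zp_zero"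
  by (rule ext) (simp add: zp_add_def zp_neg_def zp_zero_def mod_simps)
lemma zp_neg_add [simp]: "x \<in> Zp \<Longrightarrow> zneg x \<oplus> x = zp_zero"
  by (rule ext) (simp add: zp_add_def zp_neg_def zp_zero_def mod_simps)
lemma zp_mul_commute: "x \<otimes> y = y \<otimes> x"
  by (rule ext) (simp add: zp_mul_def algebra_simps)
lemma zp_mul_assoc: "(x \<otimes> y) \<otimes> z = x \<otimes> (y \<otimes> z)"
  by (rule ext) (simp add: zp_mul_def mod_simps algebra_simps)
lemma zp_mul_left_commute: "x \<otimes> (y \<otimes> z) = y \<otimes> (x \<otimes> z)"
  by (metis zp_mul_assoc zp_mul_commute)
lemma zp_mul_one [simp]: "x \<in> Zp \<Longrightarrow> x \<otimes> zone = x"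
  by (rule ext) (simp add: zp_mul_def zp_one_def mod_simps)
lemma zp_one_mul [simp]: "x \<in> Zp \<Longrightarrow> zone \<otimes> x = x"
  by (rule ext) (simp add: zp_mul_def zp_one_def mod_simps)
lemma zp_mul_zero [simp]: "x \<otimes> zp_zero = zp_zero"
  by (rule ext) (simp add: zp_mul_def zp_zero_def)
lemma zp_zero_mul [simp]: "zp_zero \<otimes> x = zp_zero"
  by (rule ext) (simp add: zp_mul_def zp_zero_def)
lemma zp_distrib_left: "x \<otimes> (y \<oplus> z) = x \<otimes> y \<oplus> x \<otimes> z"
  by (rule ext) (simp add: zp_mul_def zp_add_def mod_simps algebra_simps)
lemma zp_distrib_right: "(y \<oplus> z) \<otimes> x = y \<otimes> x \<oplus> z \<otimes> x"
  by (rule ext) (simp add: zp_mul_def zp_add_def mod_simps algebra_simps)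
lemma zp_neg_mul: "zneg x \<otimes> y = zneg (x \<otimes> y)"
  by (rule ext) (simp add: zp_mul_def zp_neg_def mod_simps algebra_simps)
lemma zp_mul_neg: "y \<otimes> zneg x = zneg (y \<otimes> x)"
  by (rule ext) (simp add: zp_mul_def zp_neg_def mod_simps algebra_simps)
lemma zp_neg_add_distrib: "zneg (x \<oplus> y) = zneg x \<oplus> zneg y"
  by (rule ext) (simp add: zp_add_def zp_neg_def mod_simps algebra_simps)
lemma zp_neg_neg [simp]: "x \<in> Zp \<Longrightarrow> zneg (zneg x) = x"
  by (rule ext) (simp add: zp_neg_def mod_simps)
lemma zp_neg_zero [simp]: "zneg zp_zero = zp_zero"
  by (rule ext) (simp add: zp_neg_def zp_zero_def)

lemma zp_of_int_add: "zp_of_int k \<oplus> zp_of_int l = zp_of_int (k + l)"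
  by (rule ext) (simp add: zp_add_def zp_of_int_def mod_simps)
lemma zp_of_int_mul: "zp_of_int k \<otimes> zp_of_int l = zp_of_int (k * l)"
  by (rule ext) (simp add: zp_mul_def zp_of_int_def mod_simps)
lemma zp_of_int_neg: "zneg (zp_of_int k) = zp_of_int (- k)"
  by (rule ext) (simp add: zp_neg_def zp_of_int_def mod_simps)
lemma zp_of_int_0 [simp]: "zp_of_int 0 = zp_zero"
  by (rule ext) (simp add: zp_of_int_def zp_zero_def)
lemma zp_of_int_1 [simp]: "zp_of_int 1 = zone"
  by (rule ext) (simp add: zp_of_int_def zp_one_def)

lemma zp_sub_eq_zero_iff: "x \<in> Zp \<Longrightarrow> y \<in> Zp \<Longrightarrow> x \<oplus> zneg y = zp_zero \<longleftrightarrow> x = y"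
  by (metis zp_add_assoc zp_add_neg zp_add_zero zp_neg_add zp_add_commute zp_neg_mem)

text \<open>The level-\<open>j\<close> residue of \<open>z\<close> vanishes iff \<open>p ^ j\<close> divides \<open>z\<close> in \<open>\<int>\<^sub>p\<close>.\<close>

definition pdvd :: "nat \<Rightarrow> zp \<Rightarrow> bool" where
  "pdvd j z \<longleftrightarrow> z j = 0"

abbreviation zp_unit :: "zp \<Rightarrow> bool" where
  "zp_unit z \<equiv> \<not> pdvd 1 z"

abbreviation ppow :: "nat \<Rightarrow> zp" where
  "ppow j \<equiv> zp_of_int (int p ^ j)"

lemma pdvd_iff: "z \<in> Zp \<Longrightarrow> pdvd j z \<longleftrightarrow> (\<forall>n\<ge>j. int p ^ j dvd z n)"
  unfolding pdvd_def by (metis zp_level_compat dvd_eq_mod_eq_0 order_refl)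

lemma pdvdD: "z \<in> Zp \<Longrightarrow> pdvd j z \<Longrightarrow> j \<le> n \<Longrightarrow> int p ^ j dvd z n"
  using pdvd_iff by blast

lemma pdvd_0 [simp]: "z \<in> Zp \<Longrightarrow> pdvd 0 z"
  by (simp add: pdvd_def)

lemma pdvd_mono: "z \<in> Zp \<Longrightarrow> pdvd j z \<Longrightarrow> i \<le> j \<Longrightarrow> pdvd i z"
  unfolding pdvd_def by (metis zp_level_compat mod_0)

lemma pdvd_zero [simp]: "pdvd j zp_zero"
  by (simp add: pdvd_def zp_zero_def)
lemma pdvd_add: "pdvd j x \<Longrightarrow> pdvd j y \<Longrightarrow> pdvd j (x \<oplus> y)"
  by (simp add: pdvd_def zp_add_def)
lemma pdvd_neg: "pdvd j x \<Longrightarrow> pdvd j (zneg x)"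
  by (simp add: pdvd_def zp_neg_def)
lemma pdvd_mult_right: "pdvd j x \<Longrightarrow> pdvd j (x \<otimes> y)"
  by (simp add: pdvd_def zp_mul_def)
lemma pdvd_mult_left: "pdvd j y \<Longrightarrow> pdvd j (x \<otimes> y)"
  by (simp add: pdvd_def zp_mul_def)

lemma pdvd_mult:
  assumes "x \<in> Zp" "y \<in> Zp" "pdvd i x" "pdvd j y"
  shows "pdvd (i + j) (x \<otimes> y)"
proof -
  have "int p ^ i dvd x (i + j)" "int p ^ j dvd y (i + j)"
    using assms pdvdD by auto
  then have "int p ^ (i + j) dvd x (i + j) * y (i + j)"
    by (simp add: power_add mult_dvd_mono)
  then show ?thesis by (simp add: pdvd_def zp_mul_def)
qed

lemma pdvd_add_cancel:
  assumes "x \<in> Zp" "y \<in> Zp" "pdvd j (x \<oplus> y)" "pdvd j y"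
  shows "pdvd j x"
proof -
  have "x = (x \<oplus> y) \<oplus> zneg y" using assms by (simp add: zp_add_assoc)
  then show ?thesis using assms pdvd_add pdvd_neg by metis
qed

lemma pdvd_zp_of_int: "pdvd j (zp_of_int k) \<longleftrightarrow> int p ^ j dvd k"
  by (simp add: pdvd_def zp_of_int_def dvd_eq_mod_eq_0)

lemma ppow_add: "ppow i \<otimes> ppow j = ppow (i + j)"
  by (simp add: zp_of_int_mul power_add)

lemma pdvd_ppow: "pdvd j (ppow j)"
  by (simp add: pdvd_zp_of_int)

text \<open>Stated with \<open>Suc 0\<close>, the simp normal form of \<open>1 :: nat\<close>.\<close>

lemma pdvd_1_p [simp]: "pdvd (Suc 0) (zp_of_int (int p))"
  by (simp add: pdvd_zp_of_int)

lemma pdvd_ppow_mult_iff: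
  assumes "x \<in> Zp"
  shows "pdvd (i + j) (ppow i \<otimes> x) \<longleftrightarrow> pdvd j x"
proof
  assume "pdvd j x"
  then show "pdvd (i + j) (ppow i \<otimes> x)"
    using pdvd_mult[of "ppow i" x i j] pdvd_ppow assms by simp
next
  assume "pdvd (i + j) (ppow i \<otimes> x)"
  then have "(int p ^ i mod int p ^ (i + j) * x (i + j)) mod int p ^ (i + j) = 0"
    by (simp add: pdvd_def zp_mul_def zp_of_int_def)
  then have "int p ^ i * int p ^ j dvd int p ^ i * x (i + j)"
    by (simp add: mod_simps dvd_eq_mod_eq_0 power_add)
  then have "int p ^ j dvd x (i + j)"
    by (meson dvd_mult_cancel_left p_power_nonzero)
  then show "pdvd j x"
    unfolding pdvd_def using zp_level_compat[OF assms, of j "i + j"] by (simp add: dvd_eq_mod_eq_0)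
qed

lemma pdvd_imp_ppow_factor:
  assumes "z \<in> Zp" "pdvd j z"
  shows "\<exists>z'\<in>Zp. z = ppow j \<otimes> z'"
proof -
  define g where "g n = z (n + j) div int p ^ j" for n
  have g: "z (n + j) = int p ^ j * g n" for n
    using pdvdD[OF assms, of "n + j"] unfolding g_def by simp
  have g_compat: "g (Suc n) mod int p ^ n = g n mod int p ^ n" for n
  proof -
    have "z (n + j) = z (Suc (n + j)) mod int p ^ (n + j)" using zp_carrierD[OF assms(1)] by blast
    also have "\<dots> = (int p ^ j * g (Suc n)) mod (int p ^ j * int p ^ n)"
      using g[of "Suc n"] by (simp add: power_add mult.commute)
    also have "\<dots> = int p ^ j * (g (Suc n) mod int p ^ n)" by (rule mod_mult_mult1)
    finally have "int p ^ j * g n = int p ^ j * (g (Suc n) mod int p ^ n)" using g[of n] by simp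
    then show ?thesis using p_ge_2 by simp
  qed
  define z' where "z' n = g n mod int p ^ n" for n
  have "z' \<in> Zp" by (rule zp_carrierI_mod[of z' g]) (simp_all add: z'_def g_compat)
  moreover have "z = ppow j \<otimes> z'"
  proof
    fix n
    have "(ppow j \<otimes> z') n = (int p ^ j * g n) mod int p ^ n"
      by (simp add: zp_mul_def zp_of_int_def z'_def mod_simps)
    also have "\<dots> = z (n + j) mod int p ^ n" using g by simp
    also have "\<dots> = z n" using zp_level_compat[OF assms(1)] by simp
    finally show "z n = (ppow j \<otimes> z') n" by simp
  qed
  ultimately show ?thesis by blast
qed

lemma zp_unit_factorization:
  assumes "z \<in> Zp" "z \<noteq> zp_zero"
  shows "\<exists>j u. u \<in> Zp \<and> zp_unit u \<and> z = ppow j \<otimes> u"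
proof -
  have ex: "\<exists>j. \<not> pdvd (Suc j) z"
  proof (rule ccontr)
    assume "\<not> ?thesis"
    then have "pdvd j z" for j by (metis assms(1) pdvd_0 not0_implies_Suc)
    then show False using assms(2) by (auto simp: pdvd_def zp_zero_def)
  qed
  define j where "j = (LEAST j. \<not> pdvd (Suc j) z)"
  have not_Suc: "\<not> pdvd (Suc j) z" unfolding j_def by (rule LeastI_ex[OF ex])
  have "pdvd j z"
  proof (cases j)
    case (Suc i)
    then have "i < j" by simp
    then have "pdvd (Suc i) z" unfolding j_def using not_less_Least by blast
    then show ?thesis using Suc by simp
  qed (use assms in simp)
  then obtain u where u: "u \<in> Zp" "z = ppow j \<otimes> u"
    using pdvd_imp_ppow_factor[OF assms(1)] by blast
  have "zp_unit u" using not_Suc u pdvd_ppow_mult_iff[OF u(1), of j 1] by simp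
  then show ?thesis using u by blast
qed

lemma zp_unit_level: "z \<in> Zp \<Longrightarrow> zp_unit z \<Longrightarrow> n \<ge> 1 \<Longrightarrow> \<not> int p dvd z n"
  by (metis zp_level_compat dvd_eq_mod_eq_0 pdvd_def power_one_right)

lemma zp_unit_inverse:
  assumes "z \<in> Zp" "zp_unit z"
  shows "\<exists>w\<in>Zp. z \<otimes> w = zone"
proof -
  have "\<exists>w. 0 \<le> w \<and> w < int p ^ n \<and> (z n * w) mod int p ^ n = 1 mod int p ^ n" for n
  proof -
    have "coprime (z n) (int p ^ n)"
    proof (cases "n = 0")
      case False
      then show ?thesis
        using prime_imp_power_coprime_int[OF prime_int_p zp_unit_level[OF assms, of n], of n] by simp
    qed simp
    then obtain u v where "u * z n + v * int p ^ n = 1"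
      using bezout_int[of "z n" "int p ^ n"] by auto
    then have "(z n * (u mod int p ^ n)) mod int p ^ n = 1 mod int p ^ n"
      by (metis add.commute mod_mult_self2 mult.commute mod_mult_right_eq)
    then show ?thesis using p_power_pos[of n] by (metis pos_mod_sign pos_mod_bound)
  qed
  then obtain w where w: "\<And>n. 0 \<le> w n \<and> w n < int p ^ n \<and> (z n * w n) mod int p ^ n = 1 mod int p ^ n"
    by metis
  have "w (Suc n) mod int p ^ n = w n mod int p ^ n" for n
  proof -
    have "(z n * w (Suc n)) mod int p ^ n = ((z (Suc n) mod int p ^ n) * w (Suc n)) mod int p ^ n"
      using zp_level_compat[OF assms(1), of n "Suc n"] by simp
    also have "\<dots> = ((z (Suc n) * w (Suc n)) mod int p ^ Suc n) mod int p ^ n"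
      by (simp add: mod_simps mod_mod_cancel le_imp_power_dvd)
    also have "\<dots> = 1 mod int p ^ n"
      using w[of "Suc n"] by (simp add: mod_mod_cancel le_imp_power_dvd)
    finally show ?thesis using mod_inverse_unique w[of n] by blast
  qed
  then have "w \<in> Zp" using w by (intro zp_carrierI_mod[of w w]) simp_all
  moreover have "z \<otimes> w = zone"
    by (rule ext) (simp add: zp_mul_def zp_one_def w)
  ultimately show ?thesis by blast
qed

lemma zp_unit_mult:
  assumes "x \<in> Zp" "y \<in> Zp" "zp_unit x" "zp_unit y"
  shows "zp_unit (x \<otimes> y)"
proof
  assume "pdvd 1 (x \<otimes> y)"
  then have "int p dvd x 1 * y 1" by (simp add: pdvd_def zp_mul_def dvd_eq_mod_eq_0)
  then show False
    using zp_unit_level[OF assms(1,3), of 1] zp_unit_level[OF assms(2,4), of 1] prime_int_p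
    by (simp add: prime_dvd_mult_iff)
qed

lemma ppow_mult_unit_nonzero: "u \<in> Zp \<Longrightarrow> zp_unit u \<Longrightarrow> ppow j \<otimes> u \<noteq> zp_zero"
  using pdvd_ppow_mult_iff[of u j 1] by auto

lemma zp_mult_eq_zero:
  assumes "x \<in> Zp" "y \<in> Zp" "x \<otimes> y = zp_zero"
  shows "x = zp_zero \<or> y = zp_zero"
proof (rule ccontr)
  assume "\<not> ?thesis"
  then obtain i x' j y' where x': "x' \<in> Zp" "zp_unit x'" "x = ppow i \<otimes> x'"
    and y': "y' \<in> Zp" "zp_unit y'" "y = ppow j \<otimes> y'"
    using zp_unit_factorization assms by meson
  have "x \<otimes> y = ppow (i + j) \<otimes> (x' \<otimes> y')"
    using x' y' by (simp add: ppow_add[symmetric] zp_mul_assoc zp_mul_left_commute)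
  moreover have "ppow (i + j) \<otimes> (x' \<otimes> y') \<noteq> zp_zero"
    using ppow_mult_unit_nonzero[OF zp_mul_mem[OF x'(1) y'(1)] zp_unit_mult[OF x'(1) y'(1) x'(2) y'(2)]] .
  ultimately show False using assms(3) by simp
qed

lemma zp_mult_left_cancel:
  assumes "c \<in> Zp" "x \<in> Zp" "y \<in> Zp" "c \<noteq> zp_zero" "c \<otimes> x = c \<otimes> y"
  shows "x = y"
proof -
  have "c \<otimes> (x \<oplus> zneg y) = zp_zero" using assms by (simp add: zp_distrib_left zp_mul_neg)
  then show ?thesis using zp_mult_eq_zero zp_sub_eq_zero_iff assms by (meson zp_add_mem zp_neg_mem)
qed

lemma zp_one_unit [simp]: "zp_unit zone"
  using p_ge_2 by (simp add: pdvd_def zp_one_def)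

lemma ppow_nonzero: "ppow j \<noteq> zp_zero"
  using ppow_mult_unit_nonzero[OF zp_one_mem zp_one_unit, of j] by simp

lemma zp_of_int_unit: "0 < k \<Longrightarrow> k < int p \<Longrightarrow> zp_unit (zp_of_int k)"
  by (simp add: pdvd_zp_of_int) (meson zdvd_imp_le not_le)

lemma zp_unit_mult_pdvd_1:
  assumes "x \<in> Zp" "zp_unit x" "pdvd 1 (zp_of_int i \<otimes> x)"
  shows "int p dvd i"
proof -
  have "int p dvd i * x 1"
    using assms(3) by (simp add: pdvd_def zp_mul_def zp_of_int_def mod_simps dvd_eq_mod_eq_0)
  moreover have "\<not> int p dvd x 1" using zp_unit_level[OF assms(1,2), of 1] by simp
  ultimately show ?thesis using prime_int_p by (simp add: prime_dvd_mult_iff)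
qed

primrec zp_pow :: "zp \<Rightarrow> nat \<Rightarrow> zp" where
  "zp_pow c 0 = zone"
| "zp_pow c (Suc k) = c \<otimes> zp_pow c k"

lemma zp_pow_mem [simp]: "c \<in> Zp \<Longrightarrow> zp_pow c k \<in> Zp"
  by (induction k) auto

end

section \<open>The lattice \<open>L\<close> and its subalgebra \<open>N\<close>\<close>

lemma sum_mod_cong:
  "(\<And>x. x \<in> A \<Longrightarrow> f x mod (m::int) = g x mod m) \<Longrightarrow> sum f A mod m = sum g A mod m"
  by (metis (mono_tags, lifting) mod_sum_eq sum.cong)

lemma sum_sum_delta:
  assumes "finite A" "finite B"
  shows "(\<Sum>i\<in>A. \<Sum>j\<in>B. if i = i0 \<and> j = j0 then c else 0) = (if i0 \<in> A \<and> j0 \<in> B then c else (0::'a::comm_monoid_add))"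
proof -
  have "(\<Sum>i\<in>A. \<Sum>j\<in>B. if i = i0 \<and> j = j0 then c else 0)
      = (\<Sum>i\<in>A. if i = i0 then (\<Sum>j\<in>B. if j = j0 then c else 0) else 0)"
    by (rule sum.cong) auto
  then show ?thesis using assms by (simp add: sum.delta)
qed

lemma sum_sum_delta':
  "finite A \<Longrightarrow> finite B \<Longrightarrow>
   (\<Sum>i\<in>A. \<Sum>j\<in>B. if j = j0 \<and> i = i0 then c else 0) = (if i0 \<in> A \<and> j0 \<in> B then c else (0::'a::comm_monoid_add))"
  using sum_sum_delta[of A B i0 j0 c] by (simp add: conj_commute)

locale lie_lattice = padic +
  fixes d :: nat and a :: "nat \<Rightarrow> zp"
  assumes d_ge_2: "d \<ge> 2"
    and a_mem: "\<forall>k\<in>{1..d}. a k \<in> zp_carrier p"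
    and a_d_nonzero: "a d \<noteq> zp_zero"
begin

abbreviation L :: "vec set" where "L \<equiv> Lcar p d"
abbreviation br :: "vec \<Rightarrow> vec \<Rightarrow> vec" where "br \<equiv> Lbr p d a"

lemma a_coord_mem [simp]: "1 \<le> k \<Longrightarrow> k \<le> d \<Longrightarrow> a k \<in> Zp"
  using a_mem by auto

lemma vadd_apply [simp]: "vadd p u v i = u i \<oplus> v i" by (simp add: vadd_def)
lemma vsmul_apply [simp]: "vsmul p r v i = r \<otimes> v i" by (simp add: vsmul_def)
lemma vsub_apply [simp]: "vsub p u v i = u i \<oplus> zneg (v i)" by (simp add: vsub_def)
lemma vzero_apply [simp]: "vzero i = zp_zero" by (simp add: vzero_def)

lemmas vec_apply = vadd_apply vsmul_apply vsub_apply vzero_apply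

lemma L_coord_mem: "v \<in> L \<Longrightarrow> v i \<in> Zp"
  unfolding Lcar_def by (cases "i \<le> d") auto

lemma L_coord_out: "v \<in> L \<Longrightarrow> d < i \<Longrightarrow> v i = zp_zero"
  unfolding Lcar_def by auto

lemma L_memI: "(\<And>i. i \<le> d \<Longrightarrow> v i \<in> Zp) \<Longrightarrow> (\<And>i. d < i \<Longrightarrow> v i = zp_zero) \<Longrightarrow> v \<in> L"
  unfolding Lcar_def by blast

lemma L_eqI: "u \<in> L \<Longrightarrow> v \<in> L \<Longrightarrow> (\<And>i. i \<le> d \<Longrightarrow> u i = v i) \<Longrightarrow> u = v"
  by (rule ext) (metis L_coord_out not_le)

lemma vzero_mem_L [simp]: "vzero \<in> L"
  by (rule L_memI) auto
lemma vadd_mem_L [simp]: "u \<in> L \<Longrightarrow> v \<in> L \<Longrightarrow> vadd p u v \<in> L"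
  by (rule L_memI) (auto simp: L_coord_mem L_coord_out)
lemma vsmul_mem_L [simp]: "r \<in> Zp \<Longrightarrow> v \<in> L \<Longrightarrow> vsmul p r v \<in> L"
  by (rule L_memI) (auto simp: L_coord_mem L_coord_out)
lemma vsub_mem_L [simp]: "u \<in> L \<Longrightarrow> v \<in> L \<Longrightarrow> vsub p u v \<in> L"
  by (rule L_memI) (auto simp: L_coord_mem L_coord_out)

definition basis :: "nat \<Rightarrow> vec" where
  "basis i = (\<lambda>k. if k = i then zone else zp_zero)"

lemma basis_apply: "basis i k = (if k = i then zone else zp_zero)"
  by (simp add: basis_def)

lemma basis_mem_L [simp]: "i \<le> d \<Longrightarrow> basis i \<in> L"
  by (rule L_memI) (auto simp: basis_def)

lemma basis_nonzero: "basis i \<noteq> vzero"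
proof
  assume "basis i = vzero"
  then have "basis i i = zp_zero" by simp
  then have "zone = zp_zero" by (simp add: basis_apply)
  then show False using zp_one_unit by (metis pdvd_zero)
qed

lemma vsmul_vadd: "vsmul p r (vadd p u v) = vadd p (vsmul p r u) (vsmul p r v)"
  by (rule ext) (simp add: zp_distrib_left)
lemma vsmul_vsmul: "vsmul p r (vsmul p s u) = vsmul p (r \<otimes> s) u"
  by (rule ext) (simp add: zp_mul_assoc)
lemma vsmul_one [simp]: "u \<in> L \<Longrightarrow> vsmul p zone u = u"
  by (rule ext) (simp add: L_coord_mem)
lemma vsmul_zero [simp]: "vsmul p zp_zero u = vzero"
  by (rule ext) simp
lemma vsmul_vzero [simp]: "vsmul p r vzero = vzero"
  by (rule ext) simp
lemma vsub_self [simp]: "u \<in> L \<Longrightarrow> vsub p u u = vzero"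
  by (rule ext) (simp add: L_coord_mem)
lemma vsub_vzero [simp]: "u \<in> L \<Longrightarrow> vsub p u vzero = u"
  by (rule ext) (simp add: L_coord_mem)
lemma vadd_vzero [simp]: "u \<in> L \<Longrightarrow> vadd p u vzero = u"
  by (rule ext) (simp add: L_coord_mem)

lemma vsub_eq_vadd_neg: "u \<in> L \<Longrightarrow> v \<in> L \<Longrightarrow> vsub p u v = vadd p u (vsmul p (zneg zone) v)"
  by (rule ext) (simp add: L_coord_mem zp_neg_mul)
lemma vsub_eq_vzero_iff: "u \<in> L \<Longrightarrow> v \<in> L \<Longrightarrow> vsub p u v = vzero \<longleftrightarrow> u = v"
proof
  assume "u \<in> L" "v \<in> L" "vsub p u v = vzero"
  then show "u = v" by (intro ext) (metis L_coord_mem zp_sub_eq_zero_iff vsub_apply vzero_apply)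
qed simp
lemma vsub_vsmul_same: "vsub p (vsmul p r x) (vsmul p s x) = vsmul p (r \<oplus> zneg s) x"
  by (rule ext) (simp add: zp_distrib_right zp_neg_mul)
lemma vsub_int_smul:
  "vsub p (vsmul p (zp_of_int i) x) (vsmul p (zp_of_int j) x) = vsmul p (zp_of_int (i - j)) x"
  by (simp add: vsub_vsmul_same zp_of_int_neg zp_of_int_add)
lemma vsub_swap: "u \<in> L \<Longrightarrow> v \<in> L \<Longrightarrow> vsub p v u = vsmul p (zneg zone) (vsub p u v)"
  by (rule ext) (simp add: L_coord_mem zp_neg_mul zp_neg_add_distrib zp_add_commute)
lemma vsub_via: "x \<in> L \<Longrightarrow> y \<in> L \<Longrightarrow> z \<in> L \<Longrightarrow> vsub p y z = vadd p (vsub p y x) (vsub p x z)"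
proof (rule ext)
  fix i
  assume "x \<in> L" "y \<in> L" "z \<in> L"
  then have "y i \<oplus> zneg (z i) = y i \<oplus> (zneg (x i) \<oplus> x i) \<oplus> zneg (z i)"
    using L_coord_mem by simp
  then show "vsub p y z i = vadd p (vsub p y x) (vsub p x z) i"
    by (simp add: zp_add_assoc)
qed

text \<open>\<open>der\<close> is \<open>ad x\<^sub>0\<close> on the abelian ideal \<open>A\<close> spanned by \<open>x\<^sub>1, \<dots>, x\<^sub>d\<close>;
  it ignores coordinate \<open>0\<close>, so that \<open>[u, v] = u\<^sub>0 der v - v\<^sub>0 der u\<close> on all of \<open>L\<close>.\<close>

definition der :: "vec \<Rightarrow> vec" where
  "der w = (\<lambda>k. if 1 \<le> k \<and> k \<le> d then a k \<otimes> w 1 \<oplus> (if k < d then w (Suc k) else zp_zero) else zp_zero)"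

lemma der_apply: "1 \<le> k \<Longrightarrow> k \<le> d \<Longrightarrow> der w k = a k \<otimes> w 1 \<oplus> (if k < d then w (Suc k) else zp_zero)"
  by (simp add: der_def)
lemma der_apply_0 [simp]: "der w 0 = zp_zero"
  by (simp add: der_def)
lemma der_mem_L [simp]: "v \<in> L \<Longrightarrow> der v \<in> L"
  by (rule L_memI) (auto simp: der_def L_coord_mem)
lemma der_vadd: "u \<in> L \<Longrightarrow> v \<in> L \<Longrightarrow> der (vadd p u v) = vadd p (der u) (der v)"
  by (rule ext) (auto simp: der_def L_coord_mem zp_distrib_left zp_add_assoc zp_add_left_commute)
lemma der_vsmul: "r \<in> Zp \<Longrightarrow> v \<in> L \<Longrightarrow> der (vsmul p r v) = vsmul p r (der v)"
  by (rule ext) (auto simp: der_def L_coord_mem zp_distrib_left zp_mul_left_commute)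
lemma der_vsub: "u \<in> L \<Longrightarrow> v \<in> L \<Longrightarrow> der (vsub p u v) = vsub p (der u) (der v)"
  by (simp add: vsub_eq_vadd_neg der_vadd der_vsmul)
lemma der_vzero [simp]: "der vzero = vzero"
  by (rule ext) (simp add: der_def)

lemma der_basis: "2 \<le> j \<Longrightarrow> j \<le> d \<Longrightarrow> der (basis j) = basis (j - 1)"
  by (rule ext) (auto simp: der_def basis_apply)

lemma der_pdvd: "x \<in> L \<Longrightarrow> (\<And>i. pdvd n (x i)) \<Longrightarrow> pdvd n (der x i)"
  by (cases "1 \<le> i \<and> i \<le> d") (auto simp: der_def pdvd_add pdvd_mult_left)

lemma sc_level:
  assumes "1 \<le> k" "k \<le> d"
  shows "sc p d a i j k n mod int p ^ n =
    ((if i = 0 \<and> j = 1 then a k n else 0) - (if i = 1 \<and> j = 0 then a k n else 0)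
     + (if i = 0 \<and> j = Suc k \<and> k < d then 1 else 0) - (if j = 0 \<and> i = Suc k \<and> k < d then 1 else 0)) mod int p ^ n"
proof -
  consider "i = 0 \<and> j = 1" | "i = 1 \<and> j = 0" | "i = 0 \<and> 2 \<le> j \<and> j \<le> d" | "j = 0 \<and> 2 \<le> i \<and> i \<le> d"
    | "(i = 0 \<and> j = 1) = False" "(i = 1 \<and> j = 0) = False" "(i = 0 \<and> 2 \<le> j \<and> j \<le> d) = False"
      "(j = 0 \<and> 2 \<le> i \<and> i \<le> d) = False"
    by blast
  then show ?thesis
  proof cases
    case 5 \<comment> \<open>rewriting the conditions to \<open>False\<close> avoids a very slow case split\<close>
    moreover have "(i = 0 \<and> j = Suc k \<and> k < d) = False" "(j = 0 \<and> i = Suc k \<and> k < d) = False"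
      using 5 by auto
    ultimately show ?thesis unfolding sc_def by (simp only: if_False) (simp add: zp_zero_def)
  qed (use assms in \<open>auto simp: sc_def zp_neg_def zp_one_def zp_zero_def mod_simps\<close>)
qed

lemma bracket_level:
  assumes "u \<in> L" "v \<in> L" "1 \<le> k" "k \<le> d"
  shows "br u v k n = (u 0 n * v 1 n * a k n - u 1 n * v 0 n * a k n
          + (if k < d then u 0 n * v (Suc k) n - u (Suc k) n * v 0 n else 0)) mod int p ^ n"
proof -
  define c where "c i j = (if i = 0 \<and> j = 1 then a k n else 0) - (if i = 1 \<and> j = 0 then a k n else 0)
     + (if i = 0 \<and> j = Suc k \<and> k < d then 1 else 0) - (if j = 0 \<and> i = Suc k \<and> k < d then 1 else 0)"
    for i j :: nat
  have "br u v k n = (\<Sum>i\<le>d. \<Sum>j\<le>d. u i n * v j n * sc p d a i j k n) mod int p ^ n"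
    using assms by (simp add: Lbr_def)
  also have "\<dots> = (\<Sum>i\<le>d. \<Sum>j\<le>d. u i n * v j n * c i j) mod int p ^ n"
    apply (rule sum_mod_cong)+
    using sc_level[OF assms(3,4)] unfolding c_def by (metis mod_mult_right_eq)
  also have "(\<Sum>i\<le>d. \<Sum>j\<le>d. u i n * v j n * c i j) = u 0 n * v 1 n * a k n - u 1 n * v 0 n * a k n
          + (if k < d then u 0 n * v (Suc k) n - u (Suc k) n * v 0 n else 0)"
    using d_ge_2 assms unfolding c_def
    by (simp add: algebra_simps sum.distrib sum_subtractf if_distrib[of "\<lambda>x. _ * x"]
        sum.delta sum_sum_delta sum_sum_delta' cong: if_cong)
  finally show ?thesis .
qed

lemma bracket_eq:
  assumes u: "u \<in> L" and v: "v \<in> L"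
  shows "br u v = vsub p (vsmul p (u 0) (der v)) (vsmul p (v 0) (der u))"
proof
  fix k
  show "br u v k = vsub p (vsmul p (u 0) (der v)) (vsmul p (v 0) (der u)) k"
  proof (cases "1 \<le> k \<and> k \<le> d")
    case True
    show ?thesis
    proof
      fix n
      have mod_diff: "(x * (y mod m) - z * (w mod m)) mod m = (x * y - z * w) mod m" for x y z w m :: int
        by (metis mod_diff_eq mod_mult_right_eq)
      have "vsub p (vsmul p (u 0) (der v)) (vsmul p (v 0) (der u)) k n =
          (u 0 n * (a k n * v 1 n + (if k < d then v (Suc k) n else 0))
           - v 0 n * (a k n * u 1 n + (if k < d then u (Suc k) n else 0))) mod int p ^ n"
        using True by (simp add: vsub_def vsmul_def der_def zp_add_def zp_neg_def zp_mul_def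
            zp_zero_def mod_simps mod_diff)
      then show "br u v k n = vsub p (vsmul p (u 0) (der v)) (vsmul p (v 0) (der u)) k n"
        using bracket_level[OF u v] True by (cases "k < d") (simp_all add: algebra_simps)
    qed
  next
    case False
    have "sc p d a i j 0 = zp_zero" for i j
      by (auto simp: sc_def)
    then have "br u v k = zp_zero"
      using False by (cases "k = 0") (auto simp: Lbr_def zp_zero_def)
    then show ?thesis using False by (auto simp: der_def)
  qed
qed

lemma bracket_apply_0: "u \<in> L \<Longrightarrow> v \<in> L \<Longrightarrow> br u v 0 = zp_zero"
  by (simp add: bracket_eq L_coord_mem)

lemma bracket_A_right: "v \<in> L \<Longrightarrow> w \<in> L \<Longrightarrow> w 0 = zp_zero \<Longrightarrow> br v w = vsmul p (v 0) (der w)"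
  by (simp add: bracket_eq L_coord_mem)

lemma bracket_A_A: "v \<in> L \<Longrightarrow> w \<in> L \<Longrightarrow> v 0 = zp_zero \<Longrightarrow> w 0 = zp_zero \<Longrightarrow> br v w = vzero"
  by (simp add: bracket_eq)

lemma der_injective_on_A:
  assumes z: "z \<in> L" "z 0 = zp_zero" "der z = vzero"
  shows "z = vzero"
proof -
  have "a d \<otimes> z 1 = zp_zero"
    using fun_cong[OF z(3), of d] d_ge_2 z(1) by (simp add: der_apply L_coord_mem)
  then have z1: "z 1 = zp_zero"
    using zp_mult_eq_zero[of "a d" "z 1"] a_d_nonzero d_ge_2 z(1) by (simp add: L_coord_mem)
  have zk: "z (Suc k) = zp_zero" if "1 \<le> k" "k < d" for k
    using fun_cong[OF z(3), of k] that z1 z(1) by (simp add: der_apply L_coord_mem)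
  have "z i = zp_zero" if "i \<le> d" for i
  proof (cases "i \<le> 1")
    case True
    then show ?thesis using z(2) z1 by (auto simp: le_Suc_eq)
  next
    case False
    then show ?thesis using zk[of "i - 1"] that by simp
  qed
  then show ?thesis using z(1) by (intro L_eqI) simp_all
qed

definition N :: "vec set" where
  "N = {v \<in> L. pdvd 1 (v 0) \<and> (\<forall>i\<in>{1..d}. pdvd (d - i) (v i))}"

abbreviation N_A :: "vec set" where
  "N_A \<equiv> {v \<in> N. v 0 = zp_zero}"

lemma N_iff: "v \<in> N \<longleftrightarrow> v \<in> L \<and> pdvd 1 (v 0) \<and> (\<forall>i\<in>{1..d}. pdvd (d - i) (v i))"
  by (simp add: N_def)

lemma N_subset_L: "v \<in> N \<Longrightarrow> v \<in> L"
  by (simp add: N_iff)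

lemma N_coord_mem: "v \<in> N \<Longrightarrow> v i \<in> Zp"
  by (simp add: N_subset_L L_coord_mem)

lemma N_pdvd: "v \<in> N \<Longrightarrow> 1 \<le> i \<Longrightarrow> i \<le> d \<Longrightarrow> pdvd (d - i) (v i)"
  by (simp add: N_iff)

lemma N_pdvd_1:
  assumes "v \<in> N" "i < d"
  shows "pdvd 1 (v i)"
proof (cases "i = 0")
  case False
  then have "pdvd (d - i) (v i)" using N_pdvd assms by simp
  then show ?thesis by (rule pdvd_mono[OF N_coord_mem[OF assms(1)]]) (use assms in simp)
qed (use assms in \<open>simp add: N_iff\<close>)

lemma N_coord_1_factor:
  assumes "v \<in> N"
  shows "\<exists>z\<in>Zp. ppow 1 \<otimes> v 1 = ppow d \<otimes> z"
proof -
  have "pdvd (d - 1) (v 1)" using N_pdvd[OF assms, of 1] d_ge_2 by simp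
  then obtain z where "z \<in> Zp" "v 1 = ppow (d - 1) \<otimes> z"
    using pdvd_imp_ppow_factor N_coord_mem assms by blast
  moreover have "ppow 1 \<otimes> ppow (d - 1) = ppow d" using ppow_add[of 1 "d - 1"] d_ge_2 by simp
  ultimately show ?thesis by (metis zp_mul_assoc)
qed

lemma vzero_mem_N [simp]: "vzero \<in> N"
  by (simp add: N_iff)
lemma vadd_mem_N: "u \<in> N \<Longrightarrow> v \<in> N \<Longrightarrow> vadd p u v \<in> N"
  by (simp add: N_iff pdvd_add)
lemma vsmul_mem_N: "r \<in> Zp \<Longrightarrow> v \<in> N \<Longrightarrow> vsmul p r v \<in> N"
  by (simp add: N_iff pdvd_mult_left)

lemma basis_d_mem_N: "basis d \<in> N"
  using d_ge_2 by (auto simp: N_iff basis_apply pdvd_def zp_zero_def)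

lemma der_N_pdvd:
  assumes "v \<in> N" "1 \<le> i" "i < d"
  shows "pdvd (d - Suc i) (der v i)"
proof -
  have "pdvd (d - Suc i) (v 1)"
    using N_pdvd[OF assms(1), of 1] d_ge_2 pdvd_mono[OF N_coord_mem[OF assms(1)]] assms by simp
  moreover have "pdvd (d - Suc i) (v (Suc i))" using N_pdvd[OF assms(1), of "Suc i"] assms by simp
  ultimately show ?thesis using assms by (simp add: der_apply pdvd_add pdvd_mult_left)
qed

lemma ppow_1_der_N_pdvd:
  assumes "v \<in> N" "1 \<le> i" "i \<le> d"
  shows "pdvd (d - i) (ppow 1 \<otimes> der v i)"
proof (cases "i = d")
  case False
  then have "i < d" using assms by simp
  have "pdvd (1 + (d - Suc i)) (ppow 1 \<otimes> der v i)"
    using assms(1) by (intro pdvd_mult[OF _ _ pdvd_ppow der_N_pdvd[OF assms(1,2) \<open>i < d\<close>]])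
      (simp_all add: N_subset_L L_coord_mem)
  moreover have "1 + (d - Suc i) = d - i" using False assms by simp
  ultimately show ?thesis by simp
qed (simp add: pdvd_def zp_mul_def)

lemma bracket_mem_N:
  assumes "u \<in> N" "v \<in> N"
  shows "br u v \<in> N"
proof -
  have "pdvd (d - i) (x 0 \<otimes> der y i)" if "x \<in> N" "y \<in> N" "1 \<le> i" "i \<le> d" for x y i
  proof -
    obtain r where "r \<in> Zp" "x 0 = ppow 1 \<otimes> r"
      using pdvd_imp_ppow_factor[OF N_coord_mem] \<open>x \<in> N\<close> by (meson N_iff)
    then have "x 0 \<otimes> der y i = r \<otimes> (ppow 1 \<otimes> der y i)"
      by (metis zp_mul_assoc zp_mul_commute)
    then show ?thesis
      using ppow_1_der_N_pdvd[OF that(2-4)] pdvd_mult_left by simp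
  qed
  then show ?thesis
    using assms N_subset_L unfolding bracket_eq[OF N_subset_L N_subset_L, OF assms] N_iff
    by (auto simp: L_coord_mem pdvd_add pdvd_neg)
qed

lemma N_subalg: "subalg p br L N"
  unfolding subalg_def using N_subset_L vadd_mem_N vsmul_mem_N bracket_mem_N by auto

definition trunc :: "vec \<Rightarrow> vec" where
  "trunc x = (\<lambda>i. if i \<le> d then zp_of_int (x i d) else zp_zero)"

lemma trunc_mem_L: "trunc x \<in> L"
  by (rule L_memI) (auto simp: trunc_def)

lemma sub_trunc_mem_N:
  assumes "x \<in> L"
  shows "vsub p x (trunc x) \<in> N"
proof -
  have d: "pdvd d (vsub p x (trunc x) i)" if "i \<le> d" for i
    using that by (simp add: pdvd_def trunc_def zp_add_def zp_neg_def zp_of_int_def mod_simps)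
  have "vsub p x (trunc x) i \<in> Zp" for i
    using assms trunc_mem_L by (simp add: L_coord_mem)
  then show ?thesis
    unfolding N_iff using assms trunc_mem_L pdvd_mono[OF _ d] d_ge_2 by auto
qed

lemma coset_trunc:
  assumes x: "x \<in> L"
  shows "{y \<in> L. vsub p y x \<in> N} = {y \<in> L. vsub p y (trunc x) \<in> N}"
proof -
  have t: "trunc x \<in> L" by (rule trunc_mem_L)
  have xt: "vsub p x (trunc x) \<in> N" and tx: "vsub p (trunc x) x \<in> N"
    using sub_trunc_mem_N[OF x] vsub_swap[OF x t] vsmul_mem_N by simp_all
  show ?thesis
  proof (intro Collect_cong conj_cong refl iffI)
    fix y
    assume "y \<in> L" "vsub p y x \<in> N"
    then show "vsub p y (trunc x) \<in> N" using vsub_via[OF x _ t] vadd_mem_N xt by simp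
  next
    fix y
    assume "y \<in> L" "vsub p y (trunc x) \<in> N"
    then show "vsub p y x \<in> N" using vsub_via[OF t _ x] vadd_mem_N tx by simp
  qed
qed

lemma N_finite_index: "finite_index p L N"
proof -
  define F where "F g = {y \<in> L. vsub p y (\<lambda>i. if i \<le> d then zp_of_int (g i) else zp_zero) \<in> N}"
    for g :: "nat \<Rightarrow> int"
  have "cosets p L N \<subseteq> F ` (PiE {..d} (\<lambda>_. {0..<int p ^ d}))"
  proof
    fix X
    assume "X \<in> cosets p L N"
    then obtain x where x: "x \<in> L" "X = {y \<in> L. vsub p y x \<in> N}" unfolding cosets_def by blast
    define g where "g = (\<lambda>i. if i \<le> d then x i d else undefined)"
    have "0 \<le> x i d \<and> x i d < int p ^ d" for i
      using zp_carrierD[OF L_coord_mem[OF x(1)]] by blast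
    then have g: "g \<in> PiE {..d} (\<lambda>_. {0..<int p ^ d})"
      unfolding g_def PiE_iff by (auto simp: extensional_def)
    have "trunc x = (\<lambda>i. if i \<le> d then zp_of_int (g i) else zp_zero)"
      by (rule ext) (simp add: trunc_def g_def)
    then have "X = F g" using coset_trunc[OF x(1)] x(2) F_def by simp
    then show "X \<in> F ` (PiE {..d} (\<lambda>_. {0..<int p ^ d}))" using g by blast
  qed
  moreover have "finite (PiE {..d} (\<lambda>_. {0..<int p ^ d}))" by (simp add: finite_PiE)
  ultimately show ?thesis unfolding finite_index_def by (meson finite_imageI finite_subset)
qed

definition pder :: "vec \<Rightarrow> vec" where
  "pder w = vsmul p (ppow 1) (der w)"

lemma pder_mem_L [simp]: "w \<in> L \<Longrightarrow> pder w \<in> L"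
  by (simp add: pder_def)
lemma pder_apply_0 [simp]: "pder w 0 = zp_zero"
  by (simp add: pder_def)

lemma pder_vsmul: "r \<in> Zp \<Longrightarrow> v \<in> L \<Longrightarrow> pder (vsmul p r v) = vsmul p r (pder v)"
  by (simp add: pder_def der_vsmul vsmul_vsmul zp_mul_commute)

lemma pder_mem_N: "w \<in> N \<Longrightarrow> pder w \<in> N"
  using ppow_1_der_N_pdvd N_subset_L by (auto simp: N_iff pder_def)

lemma pder_pow_mem_N: "w \<in> N \<Longrightarrow> (pder ^^ k) w \<in> N"
  by (induction k) (auto simp: pder_mem_N)

lemma pder_pow_apply_0: "w 0 = zp_zero \<Longrightarrow> (pder ^^ k) w 0 = zp_zero"
  by (induction k) auto

lemma pder_pow_basis_d:
  "k < d \<Longrightarrow> (pder ^^ k) (vsmul p (ppow 1) (basis d)) = vsmul p (ppow (Suc k)) (basis (d - k))"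
proof (induction k)
  case (Suc k)
  then have IH: "(pder ^^ k) (vsmul p (ppow 1) (basis d)) = vsmul p (ppow (Suc k)) (basis (d - k))"
    by (simp del: vec_apply)
  have pder_basis: "pder (basis (d - k)) = vsmul p (ppow 1) (basis (d - Suc k))"
    using Suc.prems der_basis[of "d - k"] by (simp add: pder_def)
  have "(pder ^^ Suc k) (vsmul p (ppow 1) (basis d)) = pder (vsmul p (ppow (Suc k)) (basis (d - k)))"
    by (simp only: funpow.simps o_apply IH)
  also have "\<dots> = vsmul p (ppow (Suc k)) (pder (basis (d - k)))"
    by (rule pder_vsmul) simp_all
  also have "\<dots> = vsmul p (ppow (Suc (Suc k))) (basis (d - Suc k))"
    by (simp only: pder_basis vsmul_vsmul ppow_add) simp
  finally show ?case .
qed simp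

text \<open>On \<open>N\<close>, bracketing with an element of \<open>A\<close> is \<open>pder\<close> up to a scalar,
  since every \<open>x\<^sub>0\<close>-coordinate in \<open>N\<close> is divisible by \<open>p\<close>.\<close>

lemma pder_closed_imp_lie_ideal:
  assumes sub: "I \<subseteq> N" and in_A: "\<And>w. w \<in> I \<Longrightarrow> w 0 = zp_zero" and "vzero \<in> I"
    and "\<And>x y. x \<in> I \<Longrightarrow> y \<in> I \<Longrightarrow> vadd p x y \<in> I"
    and smul: "\<And>r x. r \<in> Zp \<Longrightarrow> x \<in> I \<Longrightarrow> vsmul p r x \<in> I"
    and pder: "\<And>w. w \<in> I \<Longrightarrow> pder w \<in> I"
  shows "lie_ideal p br N I"
  unfolding lie_ideal_def
proof (intro conjI ballI)
  fix x y
  assume x: "x \<in> N" and y: "y \<in> I"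
  obtain r where r: "r \<in> Zp" "x 0 = ppow 1 \<otimes> r"
    using pdvd_imp_ppow_factor[OF N_coord_mem] x by (meson N_iff)
  have "br x y = vsmul p (x 0) (der y)"
    using bracket_A_right x y sub in_A N_subset_L by blast
  also have "\<dots> = vsmul p r (pder y)"
    by (simp add: r pder_def vsmul_vsmul zp_mul_commute)
  finally show "br x y \<in> I" using smul[OF r(1) pder[OF y]] by simp
qed (use assms in auto)

lemma lie_ideal_N_A: "lie_ideal p br N N_A"
  by (rule pder_closed_imp_lie_ideal) (auto simp: vadd_mem_N vsmul_mem_N pder_mem_N)

lemma N_A_nonzero: "N_A \<noteq> {vzero}"
proof -
  have "basis d \<in> N_A" using basis_d_mem_N d_ge_2 by (simp add: basis_apply)
  then show ?thesis using basis_nonzero by blast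
qed

definition J :: "vec set" where
  "J = (\<lambda>l. vsmul p (ppow 2) (der l)) ` N_A"

lemma J_eq_bracket:
  "l \<in> N_A \<Longrightarrow> vsmul p (ppow 2) (der l) = br (vsmul p (ppow 2) (basis 0)) l"
  using bracket_A_right[of "vsmul p (ppow 2) (basis 0)" l] N_subset_L by (simp add: basis_apply)

lemma J_subset_A: "w \<in> J \<Longrightarrow> w 0 = zp_zero"
  by (auto simp: J_def)

lemma J_memI: "l \<in> N_A \<Longrightarrow> vsmul p (ppow 2) (der l) \<in> J"
  unfolding J_def by (rule imageI)

lemma lie_ideal_J: "lie_ideal p br N J"
proof (rule pder_closed_imp_lie_ideal)
  show "J \<subseteq> N"
    using J_eq_bracket bracket_mem_N vsmul_mem_N[of "ppow 2" "basis 0"]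
    by (auto simp: J_def N_iff basis_apply pdvd_zp_of_int)
  show "vzero \<in> J"
    using J_memI[of vzero] by simp
  show "vadd p x y \<in> J" if xy: "x \<in> J" "y \<in> J" for x y
  proof -
    obtain l m where "l \<in> N_A" "m \<in> N_A" "x = vsmul p (ppow 2) (der l)" "y = vsmul p (ppow 2) (der m)"
      using xy unfolding J_def by blast
    then show ?thesis
      using J_memI[of "vadd p l m"] by (simp add: vadd_mem_N der_vadd vsmul_vadd N_subset_L)
  qed
  show "vsmul p r x \<in> J" if r: "r \<in> Zp" and x: "x \<in> J" for r x
  proof -
    obtain l where "l \<in> N_A" "x = vsmul p (ppow 2) (der l)"
      using x unfolding J_def by blast
    then show ?thesis
      using r J_memI[of "vsmul p r l"]
      by (simp add: vsmul_mem_N der_vsmul vsmul_vsmul zp_mul_commute N_subset_L)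
  qed
  show "pder x \<in> J" if x: "x \<in> J" for x
  proof -
    obtain l where "l \<in> N_A" "x = vsmul p (ppow 2) (der l)"
      using x unfolding J_def by blast
    then have "pder x = vsmul p (ppow 2) (der (pder l))"
      using N_subset_L[of l] by (simp add: pder_def der_vsmul vsmul_vsmul zp_mul_commute)
    moreover have "pder l \<in> N_A" using \<open>l \<in> N_A\<close> pder_mem_N by simp
    ultimately show ?thesis using J_memI by simp
  qed
qed (rule J_subset_A)

lemma J_nonzero: "J \<noteq> {vzero}"
proof -
  have "vsmul p (ppow 2) (der (basis d)) \<in> J"
    using basis_d_mem_N d_ge_2 by (auto simp: J_def basis_apply)
  moreover have "vsmul p (ppow 2) (der (basis d)) (d - 1) = ppow 2"
    using d_ge_2 der_basis[of d] by (simp add: basis_apply)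
  ultimately show ?thesis using ppow_nonzero by (metis singletonD vzero_apply)
qed

abbreviation pdA :: "vec set" where
  "pdA \<equiv> {v \<in> L. v 0 = zp_zero \<and> (\<forall>i. pdvd d (v i))}"

lemma pdA_subset_N:
  assumes "v \<in> pdA"
  shows "v \<in> N"
proof -
  have "pdvd j (v i)" if "j \<le> d" for i j
    using pdvd_mono[OF L_coord_mem, of v d i j] assms that by simp
  then show ?thesis using assms by (simp add: N_iff)
qed

lemma lie_ideal_pdA: "lie_ideal p br N pdA"
proof (rule pder_closed_imp_lie_ideal)
  show "pder w \<in> pdA" if "w \<in> pdA" for w
  proof -
    have "pdvd d (der w i)" for i
      using that der_pdvd by simp
    then show ?thesis using that by (simp add: pder_def pdvd_mult_left)
  qed
qed (auto simp: pdA_subset_N pdvd_add pdvd_mult_left)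

lemma pdA_nonzero: "pdA \<noteq> {vzero}"
proof -
  have "vsmul p (ppow d) (basis d) \<in> pdA"
    using d_ge_2 by (simp add: basis_apply pdvd_mult_right pdvd_ppow)
  moreover have "vsmul p (ppow d) (basis d) d = ppow d" by (simp add: basis_apply)
  ultimately show ?thesis using ppow_nonzero by (metis singletonD vzero_apply)
qed

lemma pdvd_imp_vec_factor:
  assumes w: "w \<in> L" "\<And>i. pdvd j (w i)"
  shows "\<exists>s\<in>L. w = vsmul p (ppow j) s \<and> (w 0 = zp_zero \<longrightarrow> s 0 = zp_zero)"
proof -
  have "\<exists>z. z \<in> Zp \<and> w i = ppow j \<otimes> z \<and> (w i = zp_zero \<longrightarrow> z = zp_zero)" for i
  proof (cases "w i = zp_zero")
    case False
    then show ?thesis using pdvd_imp_ppow_factor[OF L_coord_mem[OF w(1)] w(2)] by blast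
  qed auto
  then obtain s0 where s0: "\<And>i. s0 i \<in> Zp \<and> w i = ppow j \<otimes> s0 i \<and> (w i = zp_zero \<longrightarrow> s0 i = zp_zero)"
    by metis
  have "s0 \<in> L" by (rule L_memI) (use s0 w(1) L_coord_out in auto)
  moreover have "w = vsmul p (ppow j) s0" using s0 by (intro ext) simp
  ultimately show ?thesis using s0 by auto
qed

lemma ppow_basis_mem_N: "1 \<le> i \<Longrightarrow> i \<le> d \<Longrightarrow> vsmul p (ppow (d - i)) (basis i) \<in> N"
  by (auto simp: N_iff basis_apply pdvd_ppow pdvd_mult_right)

definition shift :: "vec \<Rightarrow> vec" where
  "shift s = (\<lambda>k. if 2 \<le> k \<and> k \<le> d then s (k - 1) else zp_zero)"

lemma shift_mem_L: "s \<in> L \<Longrightarrow> shift s \<in> L"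
  by (rule L_memI) (simp_all add: shift_def L_coord_mem)

lemma shift_apply_0: "shift s 0 = zp_zero"
  by (simp add: shift_def)

text \<open>The step of the induction that climbs from \<open>p\<^sup>n\<close> to \<open>p\<^sup>n\<^sup>+\<^sup>1\<close>: \<open>pder\<close> moves coordinates
  one step down, and the top coordinate is supplied by \<open>p x\<^sub>d\<close>.\<close>

lemma vsmul_ppow_Suc_decomp:
  assumes s: "s \<in> L" "s 0 = zp_zero"
  shows "vsmul p (ppow (Suc n)) s =
    vadd p (vsmul p (s d \<otimes> ppow n) (vsmul p (ppow 1) (basis d))) (pder (vsmul p (ppow n) (shift s)))"
proof (rule L_eqI)
  show "vadd p (vsmul p (s d \<otimes> ppow n) (vsmul p (ppow 1) (basis d))) (pder (vsmul p (ppow n) (shift s))) \<in> L"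
    using s d_ge_2 by (simp add: L_coord_mem shift_mem_L)
  fix i
  assume i: "i \<le> d"
  have p_Suc: "zp_of_int (int p) \<otimes> (ppow n \<otimes> x) = zp_of_int (int p * int p ^ n) \<otimes> x" for x
    by (simp add: zp_mul_assoc[symmetric] zp_of_int_mul)
  consider "i = 0" | "1 \<le> i \<and> i < d" | "i = d" using i by linarith
  then show "vsmul p (ppow (Suc n)) s i =
      vadd p (vsmul p (s d \<otimes> ppow n) (vsmul p (ppow 1) (basis d))) (pder (vsmul p (ppow n) (shift s))) i"
  proof cases
    case 1
    then show ?thesis using s d_ge_2 by (simp add: basis_apply)
  next
    case 2
    then show ?thesis
      using s by (simp add: basis_apply pder_def der_apply shift_def L_coord_mem p_Suc)
  next
    case 3
    then show ?thesis
      using s d_ge_2 by (simp add: basis_apply pder_def der_apply shift_def L_coord_mem)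
        (metis p_Suc zp_mul_commute)
  qed
qed (use s in simp)

lemma ppow_d_minus_2_mem_N:
  assumes "s \<in> L" "s 0 = zp_zero" "s 1 = zp_zero"
  shows "vsmul p (ppow (d - 2)) s \<in> N"
proof -
  have "pdvd (d - i) (ppow (d - 2) \<otimes> s i)" for i
  proof (cases "2 \<le> i")
    case True
    then show ?thesis
      using pdvd_mono[OF zp_mul_mem[OF zp_of_int_mem L_coord_mem[OF assms(1)]]
          pdvd_mult_right[OF pdvd_ppow]] by simp
  next
    case False
    then have "i = 0 \<or> i = 1" by auto
    then show ?thesis using assms by auto
  qed
  then show ?thesis using assms by (auto simp: N_iff L_coord_mem)
qed

lemma pder_ppow_basis_1_decomp:
  "pder (vsmul p (ppow d) (basis 1)) =
   vadd p (vsmul p (a d \<otimes> ppow d) (vsmul p (ppow 1) (basis d))) (pder (vsmul p (ppow d) (shift (der (basis 1)))))"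
proof -
  have "basis 1 \<in> L" using d_ge_2 by simp
  then have "pder (vsmul p (ppow d) (basis 1)) = vsmul p (ppow (Suc d)) (der (basis 1))"
    by (simp add: pder_def der_vsmul vsmul_vsmul zp_of_int_mul mult.commute)
  also have "\<dots> = vadd p (vsmul p (der (basis 1) d \<otimes> ppow d) (vsmul p (ppow 1) (basis d)))
      (pder (vsmul p (ppow d) (shift (der (basis 1)))))"
    using d_ge_2 by (intro vsmul_ppow_Suc_decomp) simp_all
  also have "der (basis 1) d = a d" using d_ge_2 by (simp add: der_apply basis_apply)
  finally show ?thesis .
qed

end

section \<open>Virtual endomorphisms of \<open>N\<close> of index \<open>p\<close>\<close>

locale index_p_endo = lie_lattice +
  fixes H :: "vec set" and \<phi> :: "vec \<Rightarrow> vec"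
  assumes virt_endo: "virt_endo p (Lbr p d a) (lie_lattice.N p d) H \<phi>"
    and index_p: "lindex p (lie_lattice.N p d) H = p"
begin

lemma H_subset_N: "x \<in> H \<Longrightarrow> x \<in> N"
  using virt_endo unfolding virt_endo_def subalg_def by blast
lemma H_subset_L: "x \<in> H \<Longrightarrow> x \<in> L"
  using H_subset_N N_subset_L by blast
lemma vzero_mem_H [simp]: "vzero \<in> H"
  using virt_endo unfolding virt_endo_def subalg_def by blast
lemma vadd_mem_H: "x \<in> H \<Longrightarrow> y \<in> H \<Longrightarrow> vadd p x y \<in> H"
  using virt_endo unfolding virt_endo_def subalg_def by blast
lemma vsmul_mem_H: "r \<in> Zp \<Longrightarrow> x \<in> H \<Longrightarrow> vsmul p r x \<in> H"
  using virt_endo unfolding virt_endo_def subalg_def by blast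
lemma bracket_mem_H: "x \<in> H \<Longrightarrow> y \<in> H \<Longrightarrow> br x y \<in> H"
  using virt_endo unfolding virt_endo_def subalg_def by blast
lemma vsub_mem_H: "x \<in> H \<Longrightarrow> y \<in> H \<Longrightarrow> vsub p x y \<in> H"
  using vsub_eq_vadd_neg[OF H_subset_L H_subset_L] vadd_mem_H vsmul_mem_H by simp

lemma phi_mem_N: "x \<in> H \<Longrightarrow> \<phi> x \<in> N"
  using virt_endo unfolding virt_endo_def by blast
lemma phi_mem_L: "x \<in> H \<Longrightarrow> \<phi> x \<in> L"
  using phi_mem_N N_subset_L by blast
lemma phi_vadd: "x \<in> H \<Longrightarrow> y \<in> H \<Longrightarrow> \<phi> (vadd p x y) = vadd p (\<phi> x) (\<phi> y)"
  using virt_endo unfolding virt_endo_def by blast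
lemma phi_vsmul: "r \<in> Zp \<Longrightarrow> x \<in> H \<Longrightarrow> \<phi> (vsmul p r x) = vsmul p r (\<phi> x)"
  using virt_endo unfolding virt_endo_def by blast
lemma phi_bracket: "x \<in> H \<Longrightarrow> y \<in> H \<Longrightarrow> \<phi> (br x y) = br (\<phi> x) (\<phi> y)"
  using virt_endo unfolding virt_endo_def by blast
lemma phi_vzero [simp]: "\<phi> vzero = vzero"
  using phi_vsmul[of zp_zero vzero] by simp
lemma phi_vsub: "x \<in> H \<Longrightarrow> y \<in> H \<Longrightarrow> \<phi> (vsub p x y) = vsub p (\<phi> x) (\<phi> y)"
  using vsub_eq_vadd_neg[OF H_subset_L H_subset_L] vsub_eq_vadd_neg[OF phi_mem_L phi_mem_L]
    phi_vadd phi_vsmul vsmul_mem_H by simp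

lemma not_simpleI:
  assumes "lie_ideal p br N I" "I \<subseteq> H" "\<phi> ` I \<subseteq> I" "I \<noteq> {vzero}"
  shows "\<not> simple_ve p br N H \<phi>"
proof -
  have "I \<subseteq> pow_dom N H \<phi> k" for k
    by (induction k) (use assms H_subset_N in auto)
  then have "invariant N H \<phi> I" using assms(3) by (simp add: invariant_def)
  then show ?thesis using assms unfolding simple_ve_def by blast
qed

lemma kernel_not_simpleI:
  assumes "lie_ideal p br N I" "I \<subseteq> H" "\<And>w. w \<in> I \<Longrightarrow> \<phi> w = vzero" "I \<noteq> {vzero}"
  shows "\<not> simple_ve p br N H \<phi>"
  using assms lie_ideal_def by (intro not_simpleI) auto

lemma index_p_pigeonhole:
  assumes f_mem: "\<And>j. j \<le> p \<Longrightarrow> f j \<in> N"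
    and f_incong: "\<And>i j. i < j \<Longrightarrow> j \<le> p \<Longrightarrow> vsub p (f j) (f i) \<notin> H"
  shows False
proof -
  define coset where "coset x = {y \<in> N. vsub p y x \<in> H}" for x
  have "f j \<in> coset (f j)" if "j \<le> p" for j
    using f_mem[OF that] N_subset_L by (simp add: coset_def)
  then have "coset (f i) \<noteq> coset (f j)" if "i < j" "j \<le> p" for i j
    using f_incong[OF that] that coset_def by auto
  then have "inj_on (coset \<circ> f) {..p}"
    by (intro inj_onI) (metis atMost_iff comp_apply linorder_neqE_nat)
  then have "card ((coset \<circ> f) ` {..p}) = Suc p" using card_image by fastforce
  moreover have "(coset \<circ> f) ` {..p} \<subseteq> cosets p N H"
    unfolding cosets_def coset_def using f_mem by auto
  moreover have "finite (cosets p N H)" "card (cosets p N H) = p"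
    using virt_endo index_p unfolding virt_endo_def finite_index_def lindex_def by simp_all
  ultimately show False by (metis card_mono not_less_eq_eq order_refl)
qed

lemma unit_smul_mem_H_imp:
  assumes "x \<in> L" "k \<in> Zp" "zp_unit k" "vsmul p k x \<in> H"
  shows "x \<in> H"
proof -
  obtain w where w: "w \<in> Zp" "k \<otimes> w = zone" using zp_unit_inverse assms by blast
  have "vsmul p w (vsmul p k x) \<in> H" using vsmul_mem_H[OF w(1)] assms by simp
  then show ?thesis using w assms by (simp add: vsmul_vsmul zp_mul_commute)
qed

text \<open>Otherwise \<open>0, x, \<dots>, p x\<close> would be \<open>p + 1\<close> pairwise incongruent elements.\<close>

lemma p_smul_mem_H:
  assumes x: "x \<in> N"
  shows "vsmul p (ppow 1) x \<in> H"
proof (rule ccontr)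
  assume not_H: "vsmul p (ppow 1) x \<notin> H"
  show False
  proof (rule index_p_pigeonhole[of "\<lambda>j. vsmul p (zp_of_int (int j)) x"])
    fix i j :: nat
    assume ij: "i < j" "j \<le> p"
    show "vsub p (vsmul p (zp_of_int (int j)) x) (vsmul p (zp_of_int (int i)) x) \<notin> H"
    proof (cases "j - i = p")
      case True
      then show ?thesis using ij not_H vsub_int_smul by (simp add: of_nat_diff[symmetric])
    next
      case False
      then have "zp_unit (zp_of_int (int j - int i))" using ij by (intro zp_of_int_unit) auto
      then show ?thesis
        using unit_smul_mem_H_imp[OF N_subset_L[OF x] zp_of_int_mem] not_H vsmul_mem_H
          vsub_int_smul by force
    qed
  qed (use x vsmul_mem_N in simp)
qed

text \<open>Two elements of \<open>H \<inter> A\<close> commute, so their images have proportional \<open>der\<close>,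
  and \<open>der\<close> is injective on \<open>A\<close>.\<close>

lemma phi_A_proportional:
  assumes u: "u \<in> H" "u 0 = zp_zero" and w: "w \<in> H" "w 0 = zp_zero"
  shows "vsmul p (\<phi> u 0) (\<phi> w) = vsmul p (\<phi> w 0) (\<phi> u)"
proof -
  define v where "v = vsub p (vsmul p (\<phi> u 0) (\<phi> w)) (vsmul p (\<phi> w 0) (\<phi> u))"
  have uL: "\<phi> u \<in> L" and wL: "\<phi> w \<in> L" using u w phi_mem_L by auto
  have "br (\<phi> u) (\<phi> w) = vzero"
    using phi_bracket[OF u(1) w(1)] bracket_A_A[OF H_subset_L H_subset_L] u w by simp
  then have "der v = vzero"
    using bracket_eq[OF uL wL] by (simp add: v_def der_vsub der_vsmul L_coord_mem uL wL)
  moreover have "v 0 = zp_zero" by (simp add: v_def zp_mul_commute L_coord_mem uL wL)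
  moreover have "v \<in> L" by (simp add: v_def L_coord_mem uL wL)
  ultimately have "v = vzero" using der_injective_on_A by blast
  then show ?thesis unfolding v_def using vsub_eq_vzero_iff by (simp add: L_coord_mem uL wL)
qed

lemma phi_eq_vzero_if_x0_coord_zero:
  assumes u: "u \<in> H" "u 0 = zp_zero" "\<phi> u 0 \<noteq> zp_zero"
    and w: "w \<in> H" "w 0 = zp_zero" "\<phi> w 0 = zp_zero"
  shows "\<phi> w = vzero"
proof
  fix k
  have "\<phi> u 0 \<otimes> \<phi> w k = zp_zero"
    using fun_cong[OF phi_A_proportional[OF u(1,2) w(1,2)], of k] w(3) by simp
  then show "\<phi> w k = vzero k"
    using zp_mult_eq_zero u(3) phi_mem_L[OF u(1)] phi_mem_L[OF w(1)] L_coord_mem by fastforce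
qed

text \<open>Otherwise, for \<open>u \<in> N \<inter> A\<close> outside \<open>H\<close>, the elements \<open>0, u, \<dots>, (p - 1) u, p x\<^sub>0\<close>
  would be pairwise incongruent modulo \<open>H\<close>, as the \<open>x\<^sub>0\<close>-coordinate \<open>p\<close> is not divisible by \<open>p\<^sup>2\<close>.\<close>

lemma N_A_subset_H:
  assumes H_0: "\<forall>h\<in>H. pdvd 2 (h 0)"
  shows "N_A \<subseteq> H"
proof
  fix u
  assume u: "u \<in> N_A"
  then have uL: "u \<in> L" using N_subset_L by blast
  show "u \<in> H"
  proof (rule ccontr)
    assume not_H: "u \<notin> H"
    define f where "f k = (if k < p then vsmul p (zp_of_int (int k)) u else vsmul p (ppow 1) (basis 0))" for k
    show False
    proof (rule index_p_pigeonhole[of f])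
      show "f j \<in> N" for j
        using u vsmul_mem_N[of _ u] by (auto simp: f_def N_iff[of "vsmul p _ (basis 0)"] basis_apply)
    next
      fix i j
      assume ij: "i < j" "j \<le> p"
      show "vsub p (f j) (f i) \<notin> H"
      proof (cases "j < p")
        case True
        then have "zp_unit (zp_of_int (int j - int i))" using ij by (intro zp_of_int_unit) auto
        then show ?thesis
          using True ij not_H unit_smul_mem_H_imp[OF uL zp_of_int_mem] vsub_int_smul
          by (auto simp: f_def)
      next
        case False
        then have "vsub p (f j) (f i) 0 = ppow 1" using ij u by (simp add: f_def basis_apply)
        moreover have "\<not> pdvd 2 (ppow 1)"
          using p_ge_2 by (simp add: pdvd_zp_of_int power2_eq_square zdvd_imp_le)
        ultimately show ?thesis using H_0 by metis
      qed
    qed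
  qed
qed

lemma ppow_Suc_smul_mem_H: "x \<in> N \<Longrightarrow> vsmul p (ppow (Suc k)) x \<in> H"
  using vsmul_mem_H[OF zp_of_int_mem p_smul_mem_H, of x "int p ^ k"]
  by (simp add: vsmul_vsmul zp_of_int_mul mult.commute)

lemma p2_x0_mem_H: "vsmul p (ppow 2) (basis 0) \<in> H"
  using ppow_Suc_smul_mem_H[of "vsmul p (ppow 1) (basis 0)" 0]
  by (simp add: N_iff basis_apply vsmul_vsmul zp_of_int_mul power2_eq_square)

lemma J_subset_H:
  assumes "N_A \<subseteq> H"
  shows "J \<subseteq> H"
  using J_eq_bracket bracket_mem_H[OF p2_x0_mem_H] assms unfolding J_def by auto

lemma not_simple_if_x0_coords_pdvd_2:
  assumes H_0: "\<forall>h\<in>H. pdvd 2 (h 0)"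
  shows "\<not> simple_ve p br N H \<phi>"
proof (cases "\<forall>u\<in>N_A. \<phi> u 0 = zp_zero")
  case True
  then have "\<phi> ` N_A \<subseteq> N_A" using N_A_subset_H[OF H_0] phi_mem_N by blast
  then show ?thesis using not_simpleI lie_ideal_N_A N_A_subset_H[OF H_0] N_A_nonzero by blast
next
  case False
  then obtain u where u: "u \<in> N_A" "\<phi> u 0 \<noteq> zp_zero" by blast
  have "\<phi> w = vzero" if wJ: "w \<in> J" for w
  proof (rule phi_eq_vzero_if_x0_coord_zero)
    show "u \<in> H" using u N_A_subset_H[OF H_0] by blast
    obtain l where l: "l \<in> N_A" "w = vsmul p (ppow 2) (der l)" using wJ unfolding J_def by blast
    then have "l \<in> H" using N_A_subset_H[OF H_0] by blast
    then show "\<phi> w 0 = zp_zero"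
      using l J_eq_bracket phi_bracket[OF p2_x0_mem_H] bracket_apply_0 phi_mem_L p2_x0_mem_H by auto
    show "w \<in> H" using wJ J_subset_H[OF N_A_subset_H[OF H_0]] by blast
  qed (use u wJ J_subset_A in auto)
  then show ?thesis
    using kernel_not_simpleI lie_ideal_J J_subset_H[OF N_A_subset_H[OF H_0]] J_nonzero by blast
qed

lemma exists_mem_H_x0_coord_p:
  assumes "h \<in> H" "\<not> pdvd 2 (h 0)"
  shows "\<exists>h0\<in>H. h0 0 = ppow 1"
proof -
  obtain u where u: "u \<in> Zp" "h 0 = ppow 1 \<otimes> u"
    using pdvd_imp_ppow_factor[of "h 0" 1] H_subset_N[OF assms(1)] by (auto simp: N_iff N_coord_mem)
  have "zp_unit u"
  proof
    assume "pdvd 1 u"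
    then have "pdvd (1 + 1) (ppow 1 \<otimes> u)" using pdvd_ppow_mult_iff[OF u(1)] by blast
    then show False using assms(2) u(2) by (simp add: numeral_2_eq_2)
  qed
  then obtain w where w: "w \<in> Zp" "u \<otimes> w = zone" using zp_unit_inverse[OF u(1)] by blast
  have "vsmul p w h 0 = ppow 1 \<otimes> (u \<otimes> w)"
    using u(2) by (metis vsmul_apply zp_mul_assoc zp_mul_commute)
  then have "vsmul p w h 0 = ppow 1" using w by simp
  then show ?thesis using vsmul_mem_H[OF w(1) assms(1)] by blast
qed

lemma lie_ideal_kernel_A:
  assumes h0: "h0 \<in> H" "h0 0 = ppow 1"
  shows "lie_ideal p br N {v \<in> H. v 0 = zp_zero \<and> \<phi> v = vzero}"
proof (rule pder_closed_imp_lie_ideal)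
  show "pder x \<in> {v \<in> H. v 0 = zp_zero \<and> \<phi> v = vzero}" if "x \<in> {v \<in> H. v 0 = zp_zero \<and> \<phi> v = vzero}" for x
  proof -
    have x: "x \<in> H" "x 0 = zp_zero" "\<phi> x = vzero" using that by auto
    have "br h0 x = pder x"
      using bracket_A_right[OF H_subset_L H_subset_L] h0 x by (simp add: pder_def)
    moreover have "\<phi> (br h0 x) = vzero"
      using phi_bracket[OF h0(1) x(1)] x(3) bracket_A_right[OF phi_mem_L[OF h0(1)] vzero_mem_L] by simp
    ultimately show ?thesis using bracket_mem_H[OF h0(1) x(1)] by simp
  qed
qed (auto simp: H_subset_N vadd_mem_H vsmul_mem_H phi_vadd phi_vsmul)

lemma exists_primitive_comb_mem_H:
  "\<exists>i j. \<not> (int p dvd i \<and> int p dvd j) \<and>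
     vadd p (vsmul p (zp_of_int i) (basis d)) (vsmul p (zp_of_int j) (pder (basis d))) \<in> H"
proof (rule ccontr)
  assume none: "\<not> ?thesis"
  define f where "f k = (if k < p then vsmul p (zp_of_int (int k)) (basis d) else pder (basis d))" for k
  show False
  proof (rule index_p_pigeonhole[of f])
    show "f k \<in> N" for k
      using vsmul_mem_N[OF zp_of_int_mem basis_d_mem_N] pder_mem_N[OF basis_d_mem_N] by (simp add: f_def)
  next
    fix i j
    assume ij: "i < j" "j \<le> p"
    show "vsub p (f j) (f i) \<notin> H"
    proof (cases "j < p")
      case True
      then have "vsub p (f j) (f i)
          = vadd p (vsmul p (zp_of_int (int j - int i)) (basis d)) (vsmul p (zp_of_int 0) (pder (basis d)))"
        using ij vsub_int_smul by (simp add: f_def)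
      moreover have "\<not> int p dvd (int j - int i)"
        using True ij zdvd_imp_le[of "int p" "int j - int i"] by auto
      ultimately show ?thesis using none by (metis dvd_0_right)
    next
      case False
      have "vsub p (pder (basis d)) (vsmul p (zp_of_int (int i)) (basis d))
          = vadd p (vsmul p (zp_of_int (- int i)) (basis d)) (vsmul p (zp_of_int 1) (pder (basis d)))"
        by (rule ext) (simp add: zp_of_int_neg[symmetric] zp_neg_mul zp_add_commute L_coord_mem)
      then have "vsub p (f j) (f i)
          = vadd p (vsmul p (zp_of_int (- int i)) (basis d)) (vsmul p (zp_of_int 1) (pder (basis d)))"
        using ij False by (simp add: f_def)
      moreover have "\<not> int p dvd 1" using p_ge_2 by simp
      ultimately show ?thesis using none by metis
    qed
  qed
qed

lemma ppow_shift_der_basis_1_mem_H: "vsmul p (ppow (d - 1)) (shift (der (basis 1))) \<in> H"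
proof -
  have "vsmul p (ppow (d - 2)) (shift (der (basis 1))) \<in> N"
    using d_ge_2 by (intro ppow_d_minus_2_mem_N) (simp_all add: shift_mem_L shift_apply_0, simp add: shift_def)
  then have "vsmul p (ppow 1) (vsmul p (ppow (d - 2)) (shift (der (basis 1)))) \<in> H"
    by (rule p_smul_mem_H)
  moreover have "ppow 1 \<otimes> ppow (d - 2) = ppow (d - 1)"
    using ppow_add[of 1 "d - 2"] d_ge_2 by (simp add: Suc_diff_Suc numeral_2_eq_2)
  ultimately show ?thesis by (metis vsmul_vsmul)
qed

end

section \<open>Virtual endomorphisms injective on \<open>H \<inter> A\<close>\<close>

text \<open>This is the case left open by the kernel ideal: \<open>h\<^sub>0 \<in> H\<close> has \<open>x\<^sub>0\<close>-coordinate \<open>p\<close>,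
  so that \<open>[h\<^sub>0, u] = pder u\<close> on \<open>A\<close>, and \<open>\<phi> h\<^sub>0\<close> has \<open>x\<^sub>0\<close>-coordinate \<open>p c\<close>.\<close>

locale index_p_endo_inj = index_p_endo +
  fixes h0 :: vec and c :: zp
  assumes h0_mem: "h0 \<in> H" and h0_0: "h0 0 = ppow 1"
    and c_mem: "c \<in> Zp" and phi_h0_0: "\<phi> h0 0 = ppow 1 \<otimes> c"
    and phi_inj_A: "\<And>u. u \<in> H \<Longrightarrow> u 0 = zp_zero \<Longrightarrow> \<phi> u = vzero \<Longrightarrow> u = vzero"
begin

declare vec_apply [simp del]

lemma A_proportional:
  assumes u: "u \<in> H" "u 0 = zp_zero" and w: "w \<in> H" "w 0 = zp_zero"
  shows "vsmul p (\<phi> u 0) w = vsmul p (\<phi> w 0) u"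
proof -
  have r: "\<phi> u 0 \<in> Zp" "\<phi> w 0 \<in> Zp" using u w phi_mem_L L_coord_mem by auto
  define z where "z = vsub p (vsmul p (\<phi> u 0) w) (vsmul p (\<phi> w 0) u)"
  have "z \<in> H" using r u w by (simp add: z_def vsub_mem_H vsmul_mem_H)
  moreover have "z 0 = zp_zero" using u w by (simp add: z_def vec_apply)
  moreover have "\<phi> z = vzero"
    using phi_A_proportional[OF u w] r u w phi_mem_L
    by (simp add: z_def phi_vsub vsmul_mem_H phi_vsmul)
  ultimately have "z = vzero" by (rule phi_inj_A)
  then show ?thesis using vsub_eq_vzero_iff r u w H_subset_L by (simp add: z_def)
qed

text \<open>Test the proportionality against \<open>p x\<^sub>d\<close> and \<open>p\<^sup>2 x\<^sub>d\<^sub>-\<^sub>1\<close>.\<close>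

lemma phi_A_subset_A:
  assumes u: "u \<in> H" "u 0 = zp_zero"
  shows "\<phi> u 0 = zp_zero"
proof (rule ccontr)
  assume nonzero: "\<phi> u 0 \<noteq> zp_zero"
  have c1: "\<phi> u 0 \<in> Zp" using phi_mem_L[OF u(1)] L_coord_mem by blast
  define v1 where "v1 = vsmul p (ppow 1) (basis d)"
  define v2 where "v2 = vsmul p (ppow 2) (basis (d - 1))"
  have v1: "v1 \<in> H" "v1 0 = zp_zero"
    using ppow_Suc_smul_mem_H[OF basis_d_mem_N, of 0] d_ge_2 by (simp_all add: v1_def vec_apply basis_apply)
  have v2: "v2 \<in> H" "v2 0 = zp_zero"
    using ppow_Suc_smul_mem_H[OF ppow_basis_mem_N[of "d - 1"], of 0] d_ge_2
    by (simp_all add: v2_def vsmul_vsmul zp_of_int_mul vec_apply basis_apply power2_eq_square)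
  have d1: "d - 1 \<noteq> d" using d_ge_2 by simp
  have v1_coord: "v1 d = ppow 1" by (simp add: v1_def vec_apply basis_apply)
  have v2_coord: "v2 d = zp_zero" "v2 (d - 1) = ppow 2"
    using d1 by (simp_all add: v2_def vec_apply basis_apply)
  note e1 = fun_cong[OF A_proportional[OF u v1]] and e2 = fun_cong[OF A_proportional[OF u v2]]
  have "\<phi> u 0 \<otimes> ppow 1 = \<phi> v1 0 \<otimes> u d" using e1[of d] v1_coord by (simp only: vsmul_apply)
  moreover have "\<phi> u 0 \<otimes> ppow 1 \<noteq> zp_zero"
    using zp_mult_eq_zero[OF c1 zp_of_int_mem] nonzero ppow_nonzero by blast
  ultimately have "u d \<noteq> zp_zero" by auto
  moreover have "zp_zero = \<phi> v2 0 \<otimes> u d" using e2[of d] v2_coord by (simp add: vsmul_apply)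
  ultimately have "\<phi> v2 0 = zp_zero"
    using zp_mult_eq_zero phi_mem_L[OF v2(1)] H_subset_L[OF u(1)] L_coord_mem by metis
  then have "\<phi> u 0 \<otimes> ppow 2 = zp_zero" using e2[of "d - 1"] v2_coord by (simp add: vsmul_apply vzero_apply)
  then show False using zp_mult_eq_zero[OF c1 zp_of_int_mem] nonzero ppow_nonzero by blast
qed

lemma pder_eq_bracket_h0: "u \<in> H \<Longrightarrow> u 0 = zp_zero \<Longrightarrow> pder u = br h0 u"
  using bracket_A_right[OF H_subset_L[OF h0_mem] H_subset_L] h0_0 by (simp add: pder_def)

lemma pder_mem_H: "u \<in> H \<Longrightarrow> u 0 = zp_zero \<Longrightarrow> pder u \<in> H"
  using pder_eq_bracket_h0 bracket_mem_H[OF h0_mem] by simp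

lemma phi_pder:
  assumes u: "u \<in> H" "u 0 = zp_zero"
  shows "\<phi> (pder u) = vsmul p c (pder (\<phi> u))"
proof -
  have "\<phi> (pder u) = br (\<phi> h0) (\<phi> u)" using pder_eq_bracket_h0[OF u] phi_bracket[OF h0_mem u(1)] by simp
  also have "\<dots> = vsmul p (\<phi> h0 0) (der (\<phi> u))"
    using bracket_A_right[OF phi_mem_L[OF h0_mem] phi_mem_L[OF u(1)] phi_A_subset_A[OF u]] .
  also have "\<dots> = vsmul p c (pder (\<phi> u))"
    using phi_h0_0 by (simp add: pder_def vsmul_vsmul zp_mul_commute)
  finally show ?thesis .
qed

lemma phi_pder_pow:
  assumes u: "u \<in> H" "u 0 = zp_zero"
  shows "(pder ^^ k) u \<in> H \<and> \<phi> ((pder ^^ k) u) = vsmul p (zp_pow c k) ((pder ^^ k) (\<phi> u))"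
proof (induction k)
  case 0
  then show ?case using u phi_mem_L[OF u(1)] by simp
next
  case (Suc k)
  have "(pder ^^ k) u 0 = zp_zero" using pder_pow_apply_0 u(2) by blast
  moreover have "(pder ^^ k) (\<phi> u) \<in> L" using pder_pow_mem_N phi_mem_N[OF u(1)] N_subset_L by blast
  ultimately show ?case
    using Suc.IH pder_mem_H phi_pder c_mem by (simp add: pder_vsmul vsmul_vsmul)
qed

definition tau :: vec where
  "tau = \<phi> (vsmul p (ppow 1) (basis d))"

lemma p_basis_d_mem_H: "vsmul p (ppow 1) (basis d) \<in> H"
  by (rule p_smul_mem_H[OF basis_d_mem_N])

lemma tau_mem_N_A: "tau \<in> N_A"
  using phi_mem_N[OF p_basis_d_mem_H] phi_A_subset_A[OF p_basis_d_mem_H] d_ge_2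
  by (simp add: tau_def vec_apply basis_apply)

lemma tau_mem_L: "tau \<in> L"
  using tau_mem_N_A N_subset_L by blast

lemma tau_pdvd_1: "pdvd 1 (tau d) \<Longrightarrow> pdvd 1 (tau i)"
  using tau_mem_N_A N_pdvd_1[of tau i] L_coord_out[OF tau_mem_L, of i]
  by (cases "i < d"; cases "i = d") auto

lemma ppow_top_mem_H:
  assumes tau_d: "pdvd 1 (tau d)"
  shows "n \<le> d \<Longrightarrow> s \<in> L \<Longrightarrow> s 0 = zp_zero \<Longrightarrow> (\<forall>i. 1 \<le> i \<and> i + n \<le> d \<longrightarrow> s i = zp_zero) \<Longrightarrow>
    vsmul p (ppow n) s \<in> H \<and> (\<forall>i. pdvd n (\<phi> (vsmul p (ppow n) s) i))"
proof (induction n arbitrary: s)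
  case 0
  then have "s i = zp_zero" if "i \<le> d" for i using that by (cases "i = 0") auto
  then have "s = vzero" using "0.prems" by (intro L_eqI) (simp_all add: vzero_apply)
  then show ?case by simp (simp add: vzero_apply)
next
  case (Suc n)
  have s: "s \<in> L" "s 0 = zp_zero" using Suc.prems by simp_all
  define w1 where "w1 = vsmul p (s d \<otimes> ppow n) (vsmul p (ppow 1) (basis d))"
  define w2 where "w2 = pder (vsmul p (ppow n) (shift s))"
  have "shift s i = zp_zero" if "1 \<le> i" "i + n \<le> d" for i
    using Suc.prems(4) that by (auto simp: shift_def)
  then have IH: "vsmul p (ppow n) (shift s) \<in> H" "\<forall>i. pdvd n (\<phi> (vsmul p (ppow n) (shift s)) i)"
    using Suc.IH[OF _ shift_mem_L[OF s(1)] shift_apply_0] Suc.prems(1) by auto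
  have shift_0: "vsmul p (ppow n) (shift s) 0 = zp_zero" by (simp add: shift_apply_0 vsmul_apply)
  have w1: "w1 \<in> H" "\<phi> w1 = vsmul p (s d \<otimes> ppow n) tau"
    using vsmul_mem_H p_basis_d_mem_H phi_vsmul s(1) by (simp_all add: w1_def tau_def L_coord_mem)
  have w2: "w2 \<in> H" "\<phi> w2 = vsmul p c (pder (\<phi> (vsmul p (ppow n) (shift s))))"
    using pder_mem_H[OF IH(1) shift_0] phi_pder[OF IH(1) shift_0] by (simp_all add: w2_def)
  have decomp: "vsmul p (ppow (Suc n)) s = vadd p w1 w2"
    using vsmul_ppow_Suc_decomp[OF s] by (simp add: w1_def w2_def)
  have "pdvd (Suc n) (\<phi> (vsmul p (ppow (Suc n)) s) i)" for i
  proof -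
    have "pdvd (n + 1) ((s d \<otimes> ppow n) \<otimes> tau i)"
      using tau_pdvd_1[OF tau_d] s tau_mem_L
      by (intro pdvd_mult) (simp_all add: L_coord_mem pdvd_mult_left pdvd_ppow)
    moreover have "pdvd (1 + n) (ppow 1 \<otimes> der (\<phi> (vsmul p (ppow n) (shift s))) i)"
      using IH phi_mem_L der_pdvd
      by (intro pdvd_mult) (simp_all add: L_coord_mem pdvd_ppow)
    ultimately show ?thesis
      using decomp w1 w2 phi_vadd[OF w1(1) w2(1)]
      by (simp add: vec_apply pder_def pdvd_add pdvd_mult_left)
  qed
  then show ?case using decomp vadd_mem_H[OF w1(1) w2(1)] by simp
qed

lemma not_simple_if_pdvd_tau_d:
  assumes tau_d: "pdvd 1 (tau d)"
  shows "\<not> simple_ve p br N H \<phi>"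
proof (rule not_simpleI[OF lie_ideal_pdA _ _ pdA_nonzero])
  have "w \<in> H \<and> \<phi> w \<in> pdA" if w: "w \<in> pdA" for w
  proof -
    obtain s where s: "s \<in> L" "w = vsmul p (ppow d) s" "s 0 = zp_zero"
      using pdvd_imp_vec_factor[of w d] w by auto
    then have "w \<in> H" "\<forall>i. pdvd d (\<phi> w i)"
      using ppow_top_mem_H[OF tau_d order_refl s(1) s(3)] by simp_all
    then show ?thesis using phi_A_subset_A w phi_mem_L by simp
  qed
  then show "pdA \<subseteq> H" "\<phi> ` pdA \<subseteq> pdA" by auto
qed

text \<open>For units \<open>c\<close> and \<open>\<tau>\<^sub>d\<close>, the \<open>x\<^sub>d\<close>- and \<open>x\<^sub>d\<^sub>-\<^sub>1\<close>-coordinates of \<open>p \<phi> z\<close> for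
  \<open>z = i x\<^sub>d + j pder x\<^sub>d \<in> H\<close> force \<open>p\<close> to divide \<open>i\<close> and then \<open>j\<close>; but by the pigeonhole
  principle \<open>H\<close> contains such a \<open>z\<close> with \<open>i, j\<close> not both divisible by \<open>p\<close>.\<close>

lemma phi_p_comb:
  assumes z: "vadd p (vsmul p (zp_of_int i) (basis d)) (vsmul p (zp_of_int j) (pder (basis d))) \<in> H"
    (is "?z \<in> H")
  shows "vsmul p (ppow 1) (\<phi> ?z) = vadd p (vsmul p (zp_of_int i) tau) (vsmul p (zp_of_int j) (vsmul p c (pder tau)))"
proof -
  define u where "u = vsmul p (ppow 1) (basis d)"
  have u: "u \<in> H" "u 0 = zp_zero" using p_basis_d_mem_H d_ge_2 by (simp_all add: u_def vec_apply basis_apply)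
  have "vsmul p (ppow 1) ?z = vadd p (vsmul p (zp_of_int i) u) (vsmul p (zp_of_int j) (pder u))"
    by (simp add: u_def pder_vsmul vsmul_vadd vsmul_vsmul zp_mul_commute)
  then have "\<phi> (vsmul p (ppow 1) ?z) = vadd p (vsmul p (zp_of_int i) tau) (vsmul p (zp_of_int j) (vsmul p c (pder tau)))"
    using u phi_vadd phi_vsmul vsmul_mem_H pder_mem_H phi_pder by (simp add: tau_def u_def)
  then show ?thesis using phi_vsmul[OF zp_of_int_mem z] by simp
qed

lemma comb_mem_H_imp_p_dvd_i:
  assumes z: "vadd p (vsmul p (zp_of_int i) (basis d)) (vsmul p (zp_of_int j) (pder (basis d))) \<in> H"
    (is "?z \<in> H")
    and tau_d: "zp_unit (tau d)"
  shows "int p dvd i"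
proof -
  define Y where "Y = zp_of_int j \<otimes> (c \<otimes> (ppow 1 \<otimes> (a d \<otimes> tau 1)))"
  have tau_mem: "tau k \<in> Zp" for k using tau_mem_L L_coord_mem by blast
  have "ppow 1 \<otimes> \<phi> ?z d = zp_of_int i \<otimes> tau d \<oplus> Y"
    using fun_cong[OF phi_p_comb[OF z], of d] d_ge_2 tau_mem by (simp add: Y_def vec_apply pder_def der_apply)
  moreover have "pdvd 1 (ppow 1 \<otimes> \<phi> ?z d)" "pdvd 1 Y"
    by (simp_all add: Y_def pdvd_mult_right pdvd_mult_left)
  moreover have "Y \<in> Zp" using tau_mem c_mem d_ge_2 by (simp add: Y_def)
  ultimately have "pdvd 1 (zp_of_int i \<otimes> tau d)"
    using pdvd_add_cancel[OF zp_mul_mem[OF zp_of_int_mem tau_mem]] by simp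
  then show ?thesis using zp_unit_mult_pdvd_1[OF tau_mem tau_d] by (simp add: zp_mul_commute)
qed

lemma comb_mem_H_imp_p_dvd_j:
  assumes z: "vadd p (vsmul p (zp_of_int i) (basis d)) (vsmul p (zp_of_int j) (pder (basis d))) \<in> H"
    (is "?z \<in> H")
    and unit: "zp_unit c" "zp_unit (tau d)" and i: "int p dvd i"
  shows "int p dvd j"
proof -
  define Y1 where "Y1 = zp_of_int j \<otimes> (c \<otimes> (ppow 1 \<otimes> (a (d - 1) \<otimes> tau 1)))"
  define Y2 where "Y2 = zp_of_int j \<otimes> (c \<otimes> (ppow 1 \<otimes> tau d))"
  have tau_mem: "tau k \<in> Zp" for k using tau_mem_L L_coord_mem by blast
  have d: "d - 1 < d" "1 \<le> d - 1" "Suc (d - 1) = d" using d_ge_2 by auto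
  have y: "\<phi> ?z \<in> N" "\<phi> ?z (d - 1) \<in> Zp" using phi_mem_N[OF z] N_coord_mem by auto
  have Y_mem: "Y1 \<in> Zp" "Y2 \<in> Zp" "zp_of_int i \<otimes> tau (d - 1) \<in> Zp"
    using tau_mem c_mem d by (simp_all add: Y1_def Y2_def)
  have "ppow 1 \<otimes> \<phi> ?z (d - 1) = zp_of_int i \<otimes> tau (d - 1) \<oplus> (Y1 \<oplus> Y2)"
    using fun_cong[OF phi_p_comb[OF z], of "d - 1"] d
    by (simp add: Y1_def Y2_def vec_apply pder_def der_apply zp_distrib_left)
  moreover have "pdvd (1 + 1) (ppow 1 \<otimes> \<phi> ?z (d - 1))"
    using pdvd_mult[OF zp_of_int_mem y(2) pdvd_ppow N_pdvd_1[OF y(1) d(1)]] .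
  ultimately have "pdvd (1 + 1) ((Y1 \<oplus> Y2) \<oplus> zp_of_int i \<otimes> tau (d - 1))"
    by (simp add: zp_add_commute)
  moreover have "pdvd (1 + 1) (zp_of_int i \<otimes> tau (d - 1))"
    using i N_pdvd_1[OF _ d(1)] tau_mem_N_A by (intro pdvd_mult) (simp_all add: tau_mem pdvd_zp_of_int)
  ultimately have "pdvd (1 + 1) (Y2 \<oplus> Y1)"
    using pdvd_add_cancel Y_mem by (metis zp_add_commute zp_add_mem)
  moreover have "pdvd (1 + 1) Y1"
  proof -
    have "pdvd 1 (tau 1)" using N_pdvd_1[of tau 1] tau_mem_N_A d_ge_2 by simp
    then have "pdvd (1 + 1) (ppow 1 \<otimes> (a (d - 1) \<otimes> tau 1))"
      using d tau_mem by (intro pdvd_mult) (simp_all add: pdvd_mult_left)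
    then show ?thesis by (simp add: Y1_def pdvd_mult_left)
  qed
  ultimately have "pdvd (1 + 1) Y2" using pdvd_add_cancel Y_mem by blast
  moreover have "Y2 = ppow 1 \<otimes> (zp_of_int j \<otimes> (c \<otimes> tau d))" by (simp add: Y2_def zp_mul_left_commute)
  ultimately have "pdvd 1 (zp_of_int j \<otimes> (c \<otimes> tau d))"
    using pdvd_ppow_mult_iff[of "zp_of_int j \<otimes> (c \<otimes> tau d)" 1 1] tau_mem c_mem by simp
  then show ?thesis
    using zp_unit_mult_pdvd_1[OF zp_mul_mem[OF c_mem tau_mem] zp_unit_mult[OF c_mem tau_mem unit]] by blast
qed

lemma pdvd_tau_d_if_unit_c:
  assumes "zp_unit c"
  shows "pdvd 1 (tau d)"
proof (rule ccontr)
  assume tau_d: "zp_unit (tau d)"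
  obtain i j where "\<not> (int p dvd i \<and> int p dvd j)"
    and z: "vadd p (vsmul p (zp_of_int i) (basis d)) (vsmul p (zp_of_int j) (pder (basis d))) \<in> H"
    using exists_primitive_comb_mem_H by blast
  moreover have "int p dvd i" using comb_mem_H_imp_p_dvd_i[OF z tau_d] .
  ultimately show False using comb_mem_H_imp_p_dvd_j[OF z assms tau_d] by blast
qed

text \<open>The image of \<open>pder\<^sup>d (p x\<^sub>d) = a\<^sub>d p\<^sup>d (p x\<^sub>d) + pder (p\<^sup>d s)\<close> computed in two ways; its
  \<open>x\<^sub>d\<close>-coordinate then shows that \<open>p\<close> divides \<open>\<tau>\<^sub>d\<close> when it divides \<open>c\<close>.\<close>

lemma phi_pder_pow_d:
  "vsmul p (zp_pow c d) (pder ((pder ^^ (d - 1)) tau)) =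
   vadd p (vsmul p (a d \<otimes> ppow d) tau)
     (vsmul p c (pder (vsmul p (ppow 1) (\<phi> (vsmul p (ppow (d - 1)) (shift (der (basis 1))))))))"
proof -
  define u where "u = vsmul p (ppow 1) (basis d)"
  define v where "v = vsmul p (ppow (d - 1)) (shift (der (basis 1)))"
  have u: "u \<in> H" "u 0 = zp_zero" using p_basis_d_mem_H d_ge_2 by (simp_all add: u_def vec_apply basis_apply)
  have v: "v \<in> H" "v 0 = zp_zero"
    using ppow_shift_der_basis_1_mem_H by (simp_all add: v_def vec_apply shift_apply_0)
  have pv: "vsmul p (ppow 1) v \<in> H" "vsmul p (ppow 1) v 0 = zp_zero"
    using vsmul_mem_H[OF zp_of_int_mem v(1)] v(2) by (simp_all add: vec_apply)
  obtain m where m: "d = Suc m" using d_ge_2 by (cases d) auto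
  then have pder_pow_d: "(pder ^^ d) w = pder ((pder ^^ (d - 1)) w)" for w by simp
  have "(pder ^^ d) u = pder ((pder ^^ (d - 1)) u)" by (rule pder_pow_d)
  also have "\<dots> = vadd p (vsmul p (a d \<otimes> ppow d) u) (pder (vsmul p (ppow 1) v))"
    using pder_pow_basis_d[of "d - 1"] pder_ppow_basis_1_decomp d_ge_2
    by (simp add: u_def v_def vsmul_vsmul zp_of_int_mul m)
  finally have "\<phi> ((pder ^^ d) u) = vadd p (vsmul p (a d \<otimes> ppow d) tau) (vsmul p c (pder (\<phi> (vsmul p (ppow 1) v))))"
    using u pv phi_vadd phi_vsmul vsmul_mem_H pder_mem_H phi_pder d_ge_2 by (simp add: tau_def u_def)
  moreover have "\<phi> ((pder ^^ d) u) = vsmul p (zp_pow c d) (pder ((pder ^^ (d - 1)) tau))"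
    using phi_pder_pow[OF u, of d] d_ge_2
    by (simp add: tau_def u_def pder_pow_d)
  ultimately show ?thesis using phi_vsmul[OF zp_of_int_mem v(1)] by (simp add: v_def)
qed

lemma pdvd_tau_d_if_pdvd_c:
  assumes c: "pdvd 1 c"
  shows "pdvd 1 (tau d)"
proof -
  define x where "x = \<phi> (vsmul p (ppow (d - 1)) (shift (der (basis 1))))"
  define y where "y = (pder ^^ (d - 1)) tau"
  have x: "x \<in> N_A"
    using phi_mem_N phi_A_subset_A ppow_shift_der_basis_1_mem_H by (simp add: x_def vec_apply shift_apply_0)
  then obtain z1 where z1: "z1 \<in> Zp" "ppow 1 \<otimes> x 1 = ppow d \<otimes> z1" using N_coord_1_factor by blast
  have y: "y \<in> N_A" using pder_pow_mem_N pder_pow_apply_0 tau_mem_N_A by (simp add: y_def)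
  then obtain z2 where z2: "z2 \<in> Zp" "ppow 1 \<otimes> y 1 = ppow d \<otimes> z2" using N_coord_1_factor by blast
  have a_d: "a d \<in> Zp" using d_ge_2 by simp
  have tau_d: "tau d \<in> Zp" using tau_mem_L L_coord_mem by blast
  have "zp_pow c d \<otimes> (ppow 1 \<otimes> (a d \<otimes> y 1)) = (a d \<otimes> ppow d) \<otimes> tau d \<oplus> c \<otimes> (ppow 1 \<otimes> (a d \<otimes> (ppow 1 \<otimes> x 1)))"
    using fun_cong[OF phi_pder_pow_d, of d] d_ge_2 x_def y_def a_d N_coord_mem x y
    by (simp add: vec_apply pder_def der_apply)
  moreover have "ppow 1 \<otimes> (a d \<otimes> y 1) = a d \<otimes> (ppow d \<otimes> z2)"
    "ppow 1 \<otimes> (a d \<otimes> (ppow 1 \<otimes> x 1)) = a d \<otimes> (ppow 1 \<otimes> (ppow d \<otimes> z1))"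
    using z1 z2 by (metis zp_mul_left_commute)+
  ultimately have "(a d \<otimes> ppow d) \<otimes> (zp_pow c d \<otimes> z2) = (a d \<otimes> ppow d) \<otimes> (tau d \<oplus> c \<otimes> (ppow 1 \<otimes> z1))"
    by (simp only: zp_distrib_left) (simp add: zp_mul_assoc zp_mul_commute zp_mul_left_commute)
  moreover have "a d \<otimes> ppow d \<noteq> zp_zero"
    using zp_mult_eq_zero[OF a_d zp_of_int_mem] a_d_nonzero ppow_nonzero by blast
  ultimately have "zp_pow c d \<otimes> z2 = tau d \<oplus> c \<otimes> (ppow 1 \<otimes> z1)"
    using zp_mult_left_cancel[OF zp_mul_mem[OF a_d zp_of_int_mem]] c_mem z1 z2 tau_d by simp
  moreover have "zp_pow c d = c \<otimes> zp_pow c (d - 1)" using d_ge_2 by (cases d) auto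
  ultimately have "pdvd 1 (tau d \<oplus> c \<otimes> (ppow 1 \<otimes> z1))" using c by (metis pdvd_mult_right)
  moreover have "c \<otimes> (ppow 1 \<otimes> z1) \<in> Zp" using c_mem z1 by simp
  ultimately show ?thesis using pdvd_add_cancel[OF tau_d] pdvd_mult_right[OF c] by blast
qed

lemma not_simple: "\<not> simple_ve p br N H \<phi>"
proof (cases "zp_unit c")
  case True
  then show ?thesis using not_simple_if_pdvd_tau_d pdvd_tau_d_if_unit_c by blast
next
  case False
  then show ?thesis using not_simple_if_pdvd_tau_d pdvd_tau_d_if_pdvd_c by blast
qed

end

context index_p_endo
begin

lemma not_simple_if_x0_coord_not_pdvd_2:
  assumes "h \<in> H" "\<not> pdvd 2 (h 0)"
  shows "\<not> simple_ve p br N H \<phi>"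
proof -
  obtain h0 where h0: "h0 \<in> H" "h0 0 = ppow 1" using exists_mem_H_x0_coord_p assms by blast
  obtain c where c: "c \<in> Zp" "\<phi> h0 0 = ppow 1 \<otimes> c"
    using pdvd_imp_ppow_factor[of "\<phi> h0 0" 1] phi_mem_N[OF h0(1)] by (auto simp: N_iff N_coord_mem)
  define K where "K = {v \<in> H. v 0 = zp_zero \<and> \<phi> v = vzero}"
  show ?thesis
  proof (cases "K = {vzero}")
    case False
    then show ?thesis
      using kernel_not_simpleI[OF lie_ideal_kernel_A[OF h0]] unfolding K_def by blast
  next
    case True
    interpret index_p_endo_inj p d a H \<phi> h0 c
      by unfold_locales (use h0 c True in \<open>auto simp: K_def\<close>)
    show ?thesis by (rule not_simple)
  qed
qed

lemma index_p_not_simple: "\<not> simple_ve p br N H \<phi>"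
  using not_simple_if_x0_coords_pdvd_2 not_simple_if_x0_coord_not_pdvd_2 by blast

end

context lie_lattice
begin

theorem N_not_self_similar: "\<not> self_similar p br N p"
proof
  assume "self_similar p br N p"
  then obtain H \<phi> where H: "virt_endo p br N H \<phi>" "lindex p N H = p" and "simple_ve p br N H \<phi>"
    unfolding self_similar_def by blast
  interpret index_p_endo p d a H \<phi>
    by unfold_locales (use H in auto)
  show False using index_p_not_simple \<open>simple_ve p br N H \<phi>\<close> by blast
qed

end

theorem corollary1p26:
  fixes p d :: nat and a :: "nat \<Rightarrow> zp"
  assumes "prime p"
    and "d \<ge> 2"
    and "\<forall>k\<in>{1..d}. a k \<in> zp_carrier p"
    and "a d \<noteq> zp_zero"
  shows "\<exists>N. subalg p (Lbr p d a) (Lcar p d) N \<and> finite_index p (Lcar p d) N \<and>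
             \<not> self_similar p (Lbr p d a) N p"
proof -
  interpret lie_lattice p d a
    by unfold_locales (use assms in auto)
  show ?thesis using N_subalg N_finite_index N_not_self_similar by blast
qed

end
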